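(* Let $P(X)=\sum_{i=0}^n a_iX^i\in K[X]$ be a polynomial of degree $n$. Assume that $(d,\mathrm{val}(a_d))$ is an extremal point of $\mathrm{NP}(P)$, for some integer $0\le d\le n$. Define sequences $(A_i)_{i\ge0}$, $(B_i)_{i\ge1}$, $(V_i)_{i\ge0}$ in $K[X]$ by $$A_0=\sum_{i=0}^d a_iX^i,\qquad V_0=1,$$ $$A_{i+1}=A_i+(V_iP\bmod A_i),\qquad B_{i+1}=P\,\mathrm{div}\,A_{i+1},\qquad V_{i+1}=(2V_i-V_i^2B_{i+1})\bmod A_{i+1}.$$ Then the following hold. 1. Each $A_i$ has degree $d$ and leading coefficient $a_d$, so the recursion is well defined. 2. The sequence $(A_i)$ converges coefficientwise to a polynomial $A_\infty$ which divides $P$, has degree $d$ and leading coefficient $a_d$, and satisfies $\mathrm{NF}(A_\infty)=\mathrm{NF}(P)|_{[0,d]}$. 3. Set $$\kappa=\mathrm{NF}(P)(d+1)+\mathrm{NF}(P)(d-1)-2\,\mathrm{NF}(P)(d),$$ with the conventions $\mathrm{NF}(P)(-1)=\mathrm{NF}(P)(n+1)=+\infty$. Then $\kappa>0$, and for all $i\ge0$, $$\mathrm{NF}(A_\infty-A_i)\ \ge\ \mathrm{NF}(P)|_{[0,d-1]}+2^i\kappa.$$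
   Context: $K$ is a complete discrete valuation field with valuation $\mathrm{val}:K\to\mathbb Z\cup\{+\infty\}$, normalized to be surjective, with $\mathrm{val}(0)=+\infty$. For $Q=\sum q_iX^i\in K[X]$ nonzero of degree $m$, its Newton function $\mathrm{NF}(Q):[0,m]\to\mathbb R\cup\{+\infty\}$ is the greatest convex function with $\mathrm{NF}(Q)(i)\le\mathrm{val}(q_i)$ for all integers $0\le i\le m$. Its epigraph (the convex hull of the sets $\{(i,y):y\ge\mathrm{val}(q_i)\}$) is the Newton polygon $\mathrm{NP}(Q)$; an extremal point of $\mathrm{NP}(Q)$ is a vertex of this epigraph. For a convex function $g$ on $[0,M]$ and a polynomial $Q$ of degree $\le M$, "$\mathrm{NF}(Q)\ge g$" means $\mathrm{val}(q_i)\ge g(i)$ for all integers $0\le i\le M$ (for $Q=0$ this always holds). $A\,\mathrm{div}\,B$ and $A\bmod B$ denote quotient and remainder in Euclidean division: $A=(A\,\mathrm{div}\,B)B+(A\bmod B)$ with $\deg(A\bmod B)<\deg B$. *)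

theory Defs
  imports "HOL-Analysis.Analysis" "HOL-Computational_Algebra.Polynomial"
    "HOL-Library.Extended_Real"
begin

definition complete_dvf :: "('a::field \<Rightarrow> ereal) \<Rightarrow> bool" where
  "complete_dvf val \<longleftrightarrow>
     (\<forall>x. val x = \<infinity> \<longleftrightarrow> x = 0) \<and>
     (\<forall>x y. val (x * y) = val x + val y) \<and>
     (\<forall>x y. min (val x) (val y) \<le> val (x + y)) \<and>
     range val = insert \<infinity> (range (\<lambda>k::int. ereal (of_int k))) \<and>
     (\<forall>s :: nat \<Rightarrow> 'a.
        (\<forall>M::int. \<exists>N. \<forall>m\<ge>N. \<forall>n\<ge>N. ereal (of_int M) \<le> val (s m - s n)) \<longrightarrow>
        (\<exists>l. \<forall>M::int. \<exists>N. \<forall>n\<ge>N. ereal (of_int M) \<le> val (s n - l)))"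

definition poly_val_converges ::
  "('a::field \<Rightarrow> ereal) \<Rightarrow> (nat \<Rightarrow> 'a poly) \<Rightarrow> 'a poly \<Rightarrow> bool" where
  "poly_val_converges val A L \<longleftrightarrow>
     (\<forall>j. \<forall>M::int. \<exists>N. \<forall>i\<ge>N. ereal (of_int M) \<le> val (coeff (A i) j - coeff L j))"

definition convex_on_ereal :: "real set \<Rightarrow> (real \<Rightarrow> ereal) \<Rightarrow> bool" where
  "convex_on_ereal S g \<longleftrightarrow>
     (\<forall>x\<in>S. \<forall>y\<in>S. \<forall>t. 0 \<le> t \<and> t \<le> 1 \<longrightarrow>
        g ((1 - t) * x + t * y) \<le> ereal (1 - t) * g x + ereal t * g y)"

text \<open>Outside [0, deg Q] it is
  set to +\<infinity> (this realizes the convention NF(P)(-1) = NF(P)(n+1) = +\<infinity>).\<close>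
definition NF :: "('a::field \<Rightarrow> ereal) \<Rightarrow> 'a poly \<Rightarrow> real \<Rightarrow> ereal" where
  "NF val Q x =
     (if 0 \<le> x \<and> x \<le> real (degree Q) then
        Sup {g x | g. convex_on_ereal {0..real (degree Q)} g \<and>
                      (\<forall>z\<in>{0..real (degree Q)}. g z \<noteq> -\<infinity>) \<and>
                      (\<forall>i\<le>degree Q. g (real i) \<le> val (coeff Q i))}
      else \<infinity>)"

definition NP :: "('a::field \<Rightarrow> ereal) \<Rightarrow> 'a poly \<Rightarrow> (real \<times> real) set" where
  "NP val Q = convex hull (\<Union>i\<in>{..degree Q}. {(real i, y) | y. val (coeff Q i) \<le> ereal y})"

primrec AV_seq :: "'a::field poly \<Rightarrow> nat \<Rightarrow> nat \<Rightarrow> 'a poly \<times> 'a poly" where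
  "AV_seq P d 0 = ((\<Sum>i\<le>d. monom (coeff P i) i), 1)"
| "AV_seq P d (Suc i) =
     (let A = fst (AV_seq P d i); V = snd (AV_seq P d i);
          A' = A + (V * P) mod A;
          B' = P div A';
          V' = (2 * V - V ^ 2 * B') mod A'
      in (A', V'))"

definition A_seq :: "'a::field poly \<Rightarrow> nat \<Rightarrow> nat \<Rightarrow> 'a poly" where
  "A_seq P d i = fst (AV_seq P d i)"

definition V_seq :: "'a::field poly \<Rightarrow> nat \<Rightarrow> nat \<Rightarrow> 'a poly" where
  "V_seq P d i = snd (AV_seq P d i)"

definition B_seq :: "'a::field poly \<Rightarrow> nat \<Rightarrow> nat \<Rightarrow> 'a poly" where
  "B_seq P d i = P div A_seq P d i"

end

theory Submission
  imports Defs
begin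

text \<open>
  Let \<open>\<sigma>\<close> be the slope of \<open>NF(P)\<close> just left of \<open>d\<close> and \<open>\<kappa>\<close> its kink at \<open>d\<close>. All estimates
  are lower bounds on valuations of coefficients: by a line of slope \<open>\<sigma>\<close>, or, for polynomials
  of degree \<open>< d\<close>, by \<open>NF(P)\<close> shifted up by some \<open>e\<close>. Euclidean division by any \<open>A\<close> of degree
  \<open>d\<close> with leading coefficient \<open>a\<^sub>d\<close> whose lower coefficients lie above \<open>NF(P)\<close> respects these
  bounds. The recursion is a Newton iteration for the factor \<open>A\<close> together with an approximate
  inverse \<open>V\<close> of \<open>P div A\<close> modulo \<open>A\<close>; both errors, \<open>P mod A\<^sub>i\<close> and \<open>(P div A\<^sub>i) V\<^sub>i - 1 mod A\<^sub>i\<close>,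
  are of size \<open>2\<^sup>i \<kappa>\<close>, the products of two errors appearing at each step doubling the
  exponent. Completeness gives the limit, whose remainder is smaller than any bound, hence zero.
  It differs from \<open>P\<close> below \<open>d\<close> only above \<open>NF(P)\<close>; since \<open>NF(P)\<close> on \<open>[0, d]\<close> is
  determined by supporting lines touching coefficients of index \<open>\<le> d\<close> (extremality of the
  vertex), the Newton functions agree there. Extremality also yields two distinct supporting
  lines through the vertex, whence \<open>\<kappa> > 0\<close>.
\<close>

lemma eventually_le_two_power_mult:
  fixes k X :: real
  assumes "0 < k"
  shows "\<exists>N. \<forall>n\<ge>N. X \<le> 2 ^ n * k"
proof -
  obtain N :: nat where "X / k < 2 ^ N" using real_arch_pow[of 2 "X / k"] by auto
  then have "X \<le> 2 ^ n * k" if "N \<le> n" for n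
  proof -
    have "(2::real) ^ N * k \<le> 2 ^ n * k"
      using assms power_increasing[OF that, of "2::real"] by (intro mult_right_mono) auto
    moreover have "X < 2 ^ N * k" using \<open>X / k < 2 ^ N\<close> assms by (simp add: pos_divide_less_eq)
    ultimately show ?thesis by linarith
  qed
  then show ?thesis by blast
qed

lemma ereal_le_if_min_of_int_le:
  fixes X y :: ereal
  assumes "\<And>M::int. min X (ereal (of_int M)) \<le> y"
  shows "X \<le> y"
proof (cases X)
  case (real r)
  have "min X (ereal (of_int \<lceil>r\<rceil>)) = X" using real by (simp add: min_def)
  then show ?thesis using assms[of "\<lceil>r\<rceil>"] by simp
next
  case PInf
  then show ?thesis
  proof (cases y)
    case (real s)
    with PInf assms[of "\<lceil>s\<rceil> + 1"] show ?thesis by simp linarith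
  next
    case MInf
    with PInf assms[of 0] show ?thesis by simp
  qed simp
qed simp

section \<open>Lower hulls of finite point sets\<close>

definition chord :: "(nat \<Rightarrow> real) \<Rightarrow> nat \<Rightarrow> nat \<Rightarrow> real \<Rightarrow> real" where
  "chord h i k x = (if i = k then h i else h i + (h k - h i) * (x - real i) / (real k - real i))"

lemma chord_eq_line:
  fixes h :: "nat \<Rightarrow> real"
  assumes "i < k"
  defines "s \<equiv> (h k - h i) / (real k - real i)"
  shows "chord h i k x = h i - s * real i + s * x" and "h k = h i - s * real i + s * real k"
proof -
  have "s * (real k - real i) = h k - h i" unfolding s_def using \<open>i < k\<close> by simp
  then show "h k = h i - s * real i + s * real k" by (simp add: algebra_simps)
  have "(h k - h i) * (x - real i) / (real k - real i) = s * (x - real i)"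
    unfolding s_def by simp
  then have "chord h i k x = h i + s * (x - real i)"
    using \<open>i < k\<close> unfolding chord_def by simp
  then show "chord h i k x = h i - s * real i + s * x"
    by (simp add: algebra_simps)
qed

lemma chord_of_line:
  fixes h :: "nat \<Rightarrow> real"
  assumes "i < k" "h i = a + s * real i" "h k = a + s * real k"
  shows "chord h i k x = a + s * x"
proof -
  have "h k - h i = s * (real k - real i)" using assms(2,3) by (simp add: algebra_simps)
  then have "(h k - h i) / (real k - real i) = s" using assms(1) by simp
  then show ?thesis using chord_eq_line(1)[OF assms(1), of h x] assms(2) by simp
qed

lemma chord_below_line:
  assumes "real i < x" "x < real k"
    and "h i \<le> a + s * real i" "h k \<le> a + s * real k"
    and "h i < a + s * real i \<or> h k < a + s * real k"
  shows "chord h i k x < a + s * x"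
proof -
  have pos: "real k - real i > 0" "real k - x > 0" "x - real i > 0" using assms by auto
  have "h i * (real k - x) + h k * (x - real i) < (a + s * real i) * (real k - x) + (a + s * real k) * (x - real i)"
    using assms(3-5) pos by (auto intro: add_less_le_mono add_le_less_mono)
  also have "\<dots> = (a + s * x) * (real k - real i)" by (simp add: algebra_simps)
  finally show ?thesis
    using pos assms(1,2) unfolding chord_def by (simp add: field_simps)
qed

lemma chord_above_iff_slopes:
  assumes "a < b" "b < c"
  shows "h b \<le> chord h a c (real b) \<longleftrightarrow>
    (h b - h a) / (real b - real a) \<le> (h c - h b) / (real c - real b)"
    and "h b < chord h a c (real b) \<longleftrightarrow>
    (h b - h a) / (real b - real a) < (h c - h b) / (real c - real b)"
proof -
  have pos: "real b - real a > 0" "real c - real b > 0" "real c - real a > 0" using assms by auto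
  show "h b \<le> chord h a c (real b) \<longleftrightarrow>
    (h b - h a) / (real b - real a) \<le> (h c - h b) / (real c - real b)"
    using pos assms unfolding chord_def by (simp add: field_simps)
  show "h b < chord h a c (real b) \<longleftrightarrow>
    (h b - h a) / (real b - real a) < (h c - h b) / (real c - real b)"
    using pos assms unfolding chord_def by (simp add: field_simps)
qed

lemma finite_sets_separated:
  fixes L R :: "real set"
  assumes "finite L" "finite R" "\<forall>l\<in>L. \<forall>r\<in>R. l \<le> r"
  shows "\<exists>s. (\<forall>l\<in>L. l \<le> s) \<and> (\<forall>r\<in>R. s \<le> r)"
proof (cases "L = {}")
  case True
  show ?thesis
  proof (cases "R = {}")
    case False
    then show ?thesis using True assms(2) by (intro exI[of _ "Min R"]) auto
  qed (use True in auto)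
next
  case False
  then show ?thesis using assms by (intro exI[of _ "Max L"]) auto
qed

lemma finite_sets_strictly_separated:
  fixes L R :: "real set"
  assumes "finite L" "finite R" "\<forall>l\<in>L. \<forall>r\<in>R. l < r"
  shows "\<exists>s1 s2. s1 < s2 \<and> (\<forall>l\<in>L. l \<le> s1) \<and> (\<forall>r\<in>R. s2 \<le> r)"
proof -
  define s1 where "s1 = (if L = {} then (if R = {} then 0 else Min R - 1) else Max L)"
  define s2 where "s2 = (if R = {} then s1 + 1 else Min R)"
  have "\<forall>l\<in>L. l \<le> s1" "\<forall>r\<in>R. s2 \<le> r"
    using assms(1,2) unfolding s1_def s2_def by auto
  moreover have "s1 < s2"
    using assms Max_in[OF assms(1)] Min_in[OF assms(2)]
    unfolding s1_def s2_def by (auto simp del: Min_gr_iff)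
  ultimately show ?thesis by blast
qed

lemma line_below_if_slopes_separated:
  fixes h :: "nat \<Rightarrow> real"
  assumes "\<forall>j\<in>C. j < j0 \<longrightarrow> (h j0 - h j) / (real j0 - real j) \<le> s"
    and "\<forall>j\<in>C. j0 < j \<longrightarrow> s \<le> (h j - h j0) / (real j - real j0)"
  shows "\<forall>j\<in>C. h j0 + s * (real j - real j0) \<le> h j"
proof
  fix j assume j: "j \<in> C"
  consider "j < j0" | "j = j0" | "j0 < j" by linarith
  then show "h j0 + s * (real j - real j0) \<le> h j"
  proof cases
    case 1
    then have "h j0 - h j \<le> s * (real j0 - real j)" using assms(1) j by (simp add: divide_le_eq)
    then show ?thesis by (simp add: algebra_simps)
  next
    case 3
    then have "s * (real j - real j0) \<le> h j - h j0" using assms(2) j by (simp add: le_divide_eq)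
    then show ?thesis by simp
  qed simp
qed

text \<open>A point of \<open>C\<close> strictly below the chord would yield a lower chord straddling \<open>x\<close>.\<close>

lemma minimal_chord_below:
  fixes h :: "nat \<Rightarrow> real"
  assumes "i \<in> C" "k \<in> C" "real i < x" "x < real k"
    and min: "\<forall>i'\<in>C. \<forall>k'\<in>C. real i' \<le> x \<longrightarrow> x \<le> real k' \<longrightarrow> chord h i k x \<le> chord h i' k' x"
  shows "\<forall>j\<in>C. chord h i k (real j) \<le> h j"
proof (rule ccontr)
  assume "\<not> ?thesis"
  then obtain j where j: "j \<in> C" and below: "h j < chord h i k (real j)" by auto
  have ik: "i < k" using assms by simp
  define s where "s = (h k - h i) / (real k - real i)"
  define a where "a = h i - s * real i"
  have line: "chord h i k y = a + s * y" for y
    unfolding a_def s_def using chord_eq_line(1)[OF ik] by simp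
  have hk: "h k = a + s * real k" unfolding a_def s_def using chord_eq_line(2)[OF ik] .
  consider "real j < x" | "real j = x" | "x < real j" by linarith
  then show False
  proof cases
    case 1
    then have "chord h j k x < a + s * x"
      using chord_below_line[of j x k h a s] below hk \<open>x < real k\<close> unfolding line by simp
    then show False using min j \<open>k \<in> C\<close> 1 \<open>x < real k\<close> unfolding line by force
  next
    case 2
    then have "chord h j j x < chord h i k x" using below by (simp add: chord_def)
    then show False using min j 2 by force
  next
    case 3
    have "h i = a + s * real i" unfolding a_def by simp
    then have "chord h i j x < a + s * x"
      using chord_below_line[of i x j h a s] below \<open>real i < x\<close> 3 unfolding line by simp
    then show False using min j \<open>i \<in> C\<close> 3 \<open>real i < x\<close> unfolding line by force
  qed
qed

lemma supporting_line_at_node: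
  fixes h :: "nat \<Rightarrow> real"
  assumes "finite C"
    and above: "\<forall>j\<in>C. \<forall>j'\<in>C. j < j0 \<longrightarrow> j0 < j' \<longrightarrow> h j0 \<le> chord h j j' (real j0)"
  shows "\<exists>s. \<forall>j\<in>C. h j0 + s * (real j - real j0) \<le> h j"
proof -
  define L where "L = (\<lambda>j. (h j0 - h j) / (real j0 - real j)) ` {j \<in> C. j < j0}"
  define R where "R = (\<lambda>j. (h j - h j0) / (real j - real j0)) ` {j \<in> C. j0 < j}"
  have "l \<le> r" if lr: "l \<in> L" "r \<in> R" for l r
  proof -
    obtain j j' where j: "j \<in> C" "j < j0" and j': "j' \<in> C" "j0 < j'"
      and "l = (h j0 - h j) / (real j0 - real j)" "r = (h j' - h j0) / (real j' - real j0)"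
      using lr unfolding L_def R_def by blast
    then show ?thesis using above chord_above_iff_slopes(1)[OF j(2) j'(2), of h] by blast
  qed
  moreover have "finite L" "finite R" unfolding L_def R_def using \<open>finite C\<close> by simp_all
  ultimately obtain s where "\<forall>l\<in>L. l \<le> s" "\<forall>r\<in>R. s \<le> r"
    using finite_sets_separated by blast
  then have "\<forall>j\<in>C. j < j0 \<longrightarrow> (h j0 - h j) / (real j0 - real j) \<le> s"
    and "\<forall>j\<in>C. j0 < j \<longrightarrow> s \<le> (h j - h j0) / (real j - real j0)"
    unfolding L_def R_def by blast+
  then show ?thesis using line_below_if_slopes_separated by blast
qed

lemma chord_at_ends: "chord h i k (real i) = h i" "chord h i k (real k) = h k"
  by (simp_all add: chord_def)

lemma lowest_chord_exists:
  fixes h :: "nat \<Rightarrow> real"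
  assumes "finite C" "i0 \<in> C" "k0 \<in> C" "real i0 \<le> x" "x \<le> real k0"
  obtains i k where "i \<in> C" "real i \<le> x" "k \<in> C" "x \<le> real k"
    "\<forall>i'\<in>C. \<forall>k'\<in>C. real i' \<le> x \<longrightarrow> x \<le> real k' \<longrightarrow> chord h i k x \<le> chord h i' k' x"
proof -
  define Pi where "Pi = {(i, k). i \<in> C \<and> k \<in> C \<and> real i \<le> x \<and> x \<le> real k}"
  define f where "f = (\<lambda>(i, k). chord h i k x)"
  have "Pi \<subseteq> C \<times> C" unfolding Pi_def by auto
  then have "finite Pi" using assms(1) by (meson finite_SigmaI finite_subset)
  moreover have "(i0, k0) \<in> Pi" unfolding Pi_def using assms by simp
  ultimately obtain p where "is_arg_min f (\<lambda>q. q \<in> Pi) p"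
    using ex_is_arg_min_if_finite[of Pi f] by blast
  moreover obtain i k where "p = (i, k)" by fastforce
  ultimately have "(i, k) \<in> Pi" and "\<forall>q\<in>Pi. f (i, k) \<le> f q"
    by (auto simp: is_arg_min_linorder)
  then show ?thesis using that[of i k] unfolding f_def Pi_def by auto
qed

text \<open>Take the chord that is lowest above \<open>x\<close>. If \<open>x\<close> is interior to it, the chord itself
  supports \<open>h\<close>; if \<open>x\<close> is a point of \<open>C\<close>, minimality says that no slope to the left of \<open>x\<close>
  exceeds a slope to the right, and any separating slope gives a supporting line.\<close>

lemma supporting_line_through_lowest_chord:
  fixes h :: "nat \<Rightarrow> real"
  assumes C: "finite C" and "i0 \<in> C" "k0 \<in> C" "real i0 \<le> x" "x \<le> real k0"
  obtains i k t a s where "i \<in> C" "k \<in> C" "i \<le> k" "0 \<le> t" "t \<le> 1"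
    "x = (1 - t) * real i + t * real k" "\<forall>j\<in>C. a + s * real j \<le> h j"
    "h i = a + s * real i" "h k = a + s * real k"
proof -
  obtain i k where i: "i \<in> C" "real i \<le> x" and k: "k \<in> C" "x \<le> real k"
    and min: "\<forall>i'\<in>C. \<forall>k'\<in>C. real i' \<le> x \<longrightarrow> x \<le> real k' \<longrightarrow> chord h i k x \<le> chord h i' k' x"
    using lowest_chord_exists[OF assms] by blast
  show ?thesis
  proof (cases "real i < x \<and> x < real k")
    case True
    then have "i < k" by simp
    define s where "s = (h k - h i) / (real k - real i)"
    define a where "a = h i - s * real i"
    define t where "t = (x - real i) / (real k - real i)"
    have "\<forall>j\<in>C. a + s * real j \<le> h j"
      using minimal_chord_below[OF i(1) k(1) _ _ min] True chord_eq_line(1)[OF \<open>i < k\<close>]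
      unfolding a_def s_def by simp
    moreover have "h k = a + s * real k"
      unfolding a_def s_def using chord_eq_line(2)[OF \<open>i < k\<close>] .
    moreover have "0 \<le> t" "t \<le> 1"
      using True unfolding t_def by (auto simp: field_simps)
    moreover have "t * (real k - real i) = x - real i"
      using True unfolding t_def by simp
    then have "x = (1 - t) * real i + t * real k"
      by (simp add: algebra_simps)
    ultimately show ?thesis
      using that[of i k t a s] i k \<open>i < k\<close> unfolding a_def by simp
  next
    case False
    define j0 where "j0 = (if real i = x then i else k)"
    have j0: "j0 \<in> C" "real j0 = x" unfolding j0_def using i k False by auto
    have "chord h i k x = h j0"
      unfolding j0_def using False i k chord_at_ends[of h i k] by auto
    then have "h j0 \<le> chord h j j' (real j0)" if "j \<in> C" "j' \<in> C" "j < j0" "j0 < j'" for j j'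
      using min[rule_format, OF that(1,2)] j0 that by simp
    then obtain s where "\<forall>j\<in>C. h j0 + s * (real j - real j0) \<le> h j"
      using supporting_line_at_node[OF C] by blast
    then have "\<forall>j\<in>C. (h j0 - s * real j0) + s * real j \<le> h j"
      by (simp add: algebra_simps)
    then show ?thesis
      using that[of j0 j0 0 "h j0 - s * real j0" s] j0 by simp
  qed
qed

lemma pCons_0_mod: "pCons 0 X mod A = pCons 0 (X mod A) mod (A :: 'a::field poly)"
proof -
  have "\<And>Y::'a poly. pCons 0 Y = [:0, 1:] * Y" by simp
  then show ?thesis by (metis mod_mult_right_eq)
qed

lemma newton_remainder_identity:
  fixes Q A R V c k :: "'b::comm_ring_1"
  shows "Q * A + R = - ((Q * V - 1 - k * A) * R) - (Q * c - R * k) * (V * R - c * A)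
    + (Q + (Q * c - R * k)) * (A + (V * R - c * A))"
  by (simp add: algebra_simps)

lemma coeff_truncation:
  "coeff (\<Sum>i\<le>d. monom (coeff P i) i) j = (if j \<le> d then coeff P j else 0)"
  by (simp add: coeff_sum coeff_monom)

lemma A_seq_0: "A_seq P d 0 = (\<Sum>i\<le>d. monom (coeff P i) i)"
  by (simp add: A_seq_def)

lemma V_seq_0: "V_seq P d 0 = 1"
  by (simp add: V_seq_def)

lemma A_seq_Suc: "A_seq P d (Suc i) = A_seq P d i + V_seq P d i * P mod A_seq P d i"
  by (simp only: A_seq_def V_seq_def AV_seq.simps Let_def fst_conv snd_conv)

lemma V_seq_Suc:
  "V_seq P d (Suc i) = (2 * V_seq P d i - (V_seq P d i)\<^sup>2 * (P div A_seq P d (Suc i))) mod A_seq P d (Suc i)"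
  by (simp only: A_seq_def V_seq_def AV_seq.simps Let_def fst_conv snd_conv)

lemma A_seq_const: "A_seq P d 0 dvd P \<Longrightarrow> A_seq P d i = A_seq P d 0"
  by (induction i) (simp_all add: A_seq_Suc mod_eq_0_iff_dvd dvd_mult)

section \<open>Valuations\<close>

locale valued_field =
  fixes val :: "'a::field \<Rightarrow> ereal"
  assumes complete_dvf: "complete_dvf val"
begin

lemma val_eq_infinity_iff: "val x = \<infinity> \<longleftrightarrow> x = 0"
  using complete_dvf unfolding complete_dvf_def by blast

lemma val_zero [simp]: "val 0 = \<infinity>"
  using val_eq_infinity_iff by simp

lemma val_mult: "val (x * y) = val x + val y"
  using complete_dvf unfolding complete_dvf_def by blast

lemma val_add: "min (val x) (val y) \<le> val (x + y)"
  using complete_dvf unfolding complete_dvf_def by blast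

lemma val_complete:
  fixes s :: "nat \<Rightarrow> 'a"
  assumes "\<forall>M::int. \<exists>N. \<forall>m\<ge>N. \<forall>n\<ge>N. ereal (of_int M) \<le> val (s m - s n)"
  shows "\<exists>l. \<forall>M::int. \<exists>N. \<forall>n\<ge>N. ereal (of_int M) \<le> val (s n - l)"
proof -
  have "\<forall>s :: nat \<Rightarrow> 'a.
      (\<forall>M::int. \<exists>N. \<forall>m\<ge>N. \<forall>n\<ge>N. ereal (of_int M) \<le> val (s m - s n)) \<longrightarrow>
      (\<exists>l. \<forall>M::int. \<exists>N. \<forall>n\<ge>N. ereal (of_int M) \<le> val (s n - l))"
    using complete_dvf unfolding complete_dvf_def by (elim conjE)
  then show ?thesis using assms by blast
qed

lemma val_not_minf [simp]: "val x \<noteq> -\<infinity>"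
proof -
  have "val x \<in> range val" by simp
  then show ?thesis
    using complete_dvf unfolding complete_dvf_def by auto
qed

lemma val_finite: "x \<noteq> 0 \<Longrightarrow> \<exists>r. val x = ereal r"
  using val_not_minf[of x] val_eq_infinity_iff[of x] by (cases "val x") auto

lemma val_eq_ereal_real: "x \<noteq> 0 \<Longrightarrow> val x = ereal (real_of_ereal (val x))"
  using val_finite by force

lemma val_one [simp]: "val 1 = 0"
proof -
  obtain r where "val 1 = ereal r" using val_finite[of 1] by auto
  moreover have "val 1 = val 1 + val 1" using val_mult[of 1 1] by simp
  ultimately show ?thesis by (simp add: zero_ereal_def)
qed

lemma val_minus_one [simp]: "val (-1) = 0"
proof -
  obtain r where "val (-1) = ereal r" using val_finite[of "-1"] by auto
  moreover have "val 1 = val (-1) + val (-1)" using val_mult[of "-1" "-1"] by simp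
  ultimately show ?thesis by (simp add: zero_ereal_def)
qed

lemma val_minus [simp]: "val (- x) = val x"
  using val_mult[of "-1" x] by simp

lemma val_add_ge: "M \<le> val x \<Longrightarrow> M \<le> val y \<Longrightarrow> M \<le> val (x + y)"
  using val_add[of x y] by (meson min.bounded_iff order_trans)

lemma val_diff_ge: "M \<le> val x \<Longrightarrow> M \<le> val y \<Longrightarrow> M \<le> val (x - y)"
  using val_add_ge[of M x "- y"] by simp

lemma val_sum_ge: "finite S \<Longrightarrow> (\<And>i. i \<in> S \<Longrightarrow> M \<le> val (f i)) \<Longrightarrow> M \<le> val (sum f S)"
  by (induction S rule: finite_induct) (auto intro!: val_add_ge)

lemma val_inverse: "x \<noteq> 0 \<Longrightarrow> val (inverse x) = - val x"
proof -
  assume x: "x \<noteq> 0"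
  obtain r where r: "val x = ereal r" using val_finite[OF x] by auto
  have "0 = val (x * inverse x)" using x by simp
  also have "\<dots> = val x + val (inverse x)" by (rule val_mult)
  finally show ?thesis using r by (cases "val (inverse x)") (auto simp: zero_ereal_def)
qed

lemma val_add_eq_left: assumes "val x < val y" shows "val (x + y) = val x"
proof -
  have "min (val x) (val y) \<le> val (x + y)" by (rule val_add)
  moreover have "min (val (x + y)) (val (- y)) \<le> val (x + y + - y)" by (rule val_add)
  ultimately show ?thesis using assms by (auto simp: min_def split: if_splits)
qed

lemma val_unbounded_imp_zero: "(\<And>M::int. ereal (of_int M) \<le> val x) \<Longrightarrow> x = 0"
proof (rule ccontr)
  assume h: "\<And>M::int. ereal (of_int M) \<le> val x" and "x \<noteq> 0"
  then obtain r where r: "val x = ereal r" using val_finite by auto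
  have "ereal (of_int (\<lceil>r\<rceil> + 1)) \<le> val x" by (rule h)
  with r show False by simp linarith
qed

definition above_line :: "real \<Rightarrow> real \<Rightarrow> 'a poly \<Rightarrow> bool" where
  "above_line l c Q \<longleftrightarrow> (\<forall>k. ereal (c + l * real k) \<le> val (coeff Q k))"

lemma above_line_0 [simp]: "above_line l c 0"
  by (simp add: above_line_def)

lemma above_line_1: "c \<le> 0 \<Longrightarrow> above_line l c 1"
  by (auto simp: above_line_def coeff_1 zero_ereal_def)

lemma above_line_const: "ereal c \<le> val a \<Longrightarrow> above_line l c [:a:]"
  by (auto simp: above_line_def coeff_pCons split: nat.split)

lemma above_line_monom: "ereal (c + l * real n) \<le> val a \<Longrightarrow> above_line l c (monom a n)"
  by (auto simp: above_line_def coeff_monom)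

lemma above_line_add: "above_line l c p \<Longrightarrow> above_line l c q \<Longrightarrow> above_line l c (p + q)"
  by (auto simp: above_line_def intro!: val_add_ge)

lemma above_line_diff: "above_line l c p \<Longrightarrow> above_line l c q \<Longrightarrow> above_line l c (p - q)"
  by (auto simp: above_line_def intro!: val_diff_ge)

lemma above_line_minus: "above_line l c p \<Longrightarrow> above_line l c (- p)"
  by (auto simp: above_line_def)

lemma above_line_mono: "above_line l c p \<Longrightarrow> c' \<le> c \<Longrightarrow> above_line l c' p"
  unfolding above_line_def by (meson add_le_cancel_right ereal_less_eq(3) order_trans)

lemma above_line_mult:
  assumes "above_line l c1 p" "above_line l c2 q"
  shows "above_line l (c1 + c2) (p * q)"
  unfolding above_line_def
proof
  fix k
  show "ereal (c1 + c2 + l * real k) \<le> val (coeff (p * q) k)"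
    unfolding coeff_mult
  proof (rule val_sum_ge)
    fix i assume i: "i \<in> {..k}"
    have "ereal (c1 + c2 + l * real k) = ereal (c1 + l * real i) + ereal (c2 + l * real (k - i))"
      using i by (simp add: of_nat_diff algebra_simps)
    also have "\<dots> \<le> val (coeff p i) + val (coeff q (k - i))"
      using assms unfolding above_line_def by (intro add_mono) auto
    finally show "ereal (c1 + c2 + l * real k) \<le> val (coeff p i * coeff q (k - i))"
      by (simp add: val_mult)
  qed auto
qed

lemma above_line_pCons:
  "above_line l e (pCons a E) \<Longrightarrow> ereal e \<le> val a \<and> above_line l (e + l) E"
  unfolding above_line_def
proof (intro conjI allI)
  assume h: "\<forall>k. ereal (e + l * real k) \<le> val (coeff (pCons a E) k)"
  show "ereal e \<le> val a" using h[rule_format, of 0] by simp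
  fix k show "ereal (e + l + l * real k) \<le> val (coeff E k)"
    using h[rule_format, of "Suc k"] by (simp add: algebra_simps)
qed

lemma above_line_leading_quotient:
  assumes lead: "val (coeff A d) = ereal (cA + l * real d)" and R: "above_line l c R"
    and "d \<le> degree R"
  shows "above_line l (c - cA) (monom (lead_coeff R / coeff A d) (degree R - d))"
proof (rule above_line_monom)
  have "ereal (c + l * real (degree R)) \<le> val (lead_coeff R)"
    using R by (simp add: above_line_def)
  moreover have "coeff A d \<noteq> 0" using lead by auto
  then have "val (lead_coeff R / coeff A d) = val (lead_coeff R) - ereal (cA + l * real d)"
    using lead by (simp add: divide_inverse val_mult val_inverse minus_ereal_def)
  moreover have "ereal (c - cA + l * real (degree R - d))
      = ereal (c + l * real (degree R)) - ereal (cA + l * real d)"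
    using \<open>d \<le> degree R\<close> by (simp add: of_nat_diff algebra_simps)
  ultimately show "ereal (c - cA + l * real (degree R - d)) \<le> val (lead_coeff R / coeff A d)"
    by (metis ereal_minus_mono order_refl)
qed

lemma above_line_mod_div:
  assumes dA: "degree A = d" and lead: "val (coeff A d) = ereal (cA + l * real d)"
    and A: "above_line l cA A" and R: "above_line l c R"
  shows "above_line l c (R mod A) \<and> above_line l (c - cA) (R div A)"
  using R
proof (induction R rule: measure_induct_rule[where f = "\<lambda>R. if R = 0 then 0 else Suc (degree R)"])
  case (less R)
  have A0: "A \<noteq> 0" and ad0: "coeff A d \<noteq> 0" using lead dA by auto
  show ?case
  proof (cases "R \<noteq> 0 \<and> d \<le> degree R")
    case False
    then show ?thesis using less.prems dA by (auto simp: mod_poly_less div_poly_less)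
  next
    case True
    define m where "m = monom (coeff R (degree R) / coeff A d) (degree R - d)"
    define R' where "R' = R - m * A"
    have "degree m \<le> degree R - d" unfolding m_def by (rule degree_monom_le)
    then have "degree (m * A) \<le> degree R"
      using degree_mult_le[of m A] True dA by linarith
    then have "degree R' \<le> degree R"
      unfolding R'_def using degree_diff_le_max[of R "m * A"] by simp
    moreover have "coeff R' (degree R) = 0"
      using True ad0 by (simp add: R'_def m_def coeff_monom_mult)
    ultimately have "R' = 0 \<or> degree R' < degree R"
      by (metis leading_coeff_0_iff le_neq_implies_less)
    then have smaller: "(if R' = 0 then 0 else Suc (degree R')) < (if R = 0 then 0 else Suc (degree R))"
      using True by auto
    have m: "above_line l (c - cA) m"
      unfolding m_def using above_line_leading_quotient[OF lead less.prems] True by simp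
    have "above_line l c R'"
      unfolding R'_def using above_line_diff[OF less.prems] above_line_mult[OF m A] by simp
    with less.IH[OF smaller]
    have IH: "above_line l c (R' mod A)" "above_line l (c - cA) (R' div A)" by blast+
    have "R = R' + m * A" by (simp add: R'_def)
    then have "R mod A = R' mod A" and "R div A = m + R' div A"
      using A0 by (simp_all add: mod_mult_self1 div_mult_self1)
    then show ?thesis using IH m by (simp add: above_line_add)
  qed
qed

end

section \<open>The Newton function\<close>

context valued_field
begin

definition NF_minorant :: "'a poly \<Rightarrow> (real \<Rightarrow> ereal) \<Rightarrow> bool" where
  "NF_minorant Q g \<longleftrightarrow> convex_on_ereal {0..real (degree Q)} g
     \<and> (\<forall>z\<in>{0..real (degree Q)}. g z \<noteq> -\<infinity>) \<and> (\<forall>i\<le>degree Q. g (real i) \<le> val (coeff Q i))"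

lemma NF_outside: "x < 0 \<or> real (degree Q) < x \<Longrightarrow> NF val Q x = \<infinity>"
  by (auto simp: NF_def)

lemma NF_upper: "0 \<le> x \<Longrightarrow> x \<le> real (degree Q) \<Longrightarrow> NF_minorant Q g \<Longrightarrow> g x \<le> NF val Q x"
  unfolding NF_def NF_minorant_def by (auto intro!: Sup_upper)

lemma NF_least:
  "0 \<le> x \<Longrightarrow> x \<le> real (degree Q) \<Longrightarrow> (\<And>g. NF_minorant Q g \<Longrightarrow> g x \<le> B) \<Longrightarrow> NF val Q x \<le> B"
  unfolding NF_def NF_minorant_def by (auto intro!: Sup_least)

lemma NF_ge_line:
  assumes "\<forall>j\<le>degree Q. ereal (a + s * real j) \<le> val (coeff Q j)" "0 \<le> x" "x \<le> real (degree Q)"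
  shows "ereal (a + s * x) \<le> NF val Q x"
proof -
  have "NF_minorant Q (\<lambda>z. ereal (a + s * z))"
    unfolding NF_minorant_def convex_on_ereal_def
  proof (intro conjI ballI allI impI)
    fix u v t :: real
    have "a + s * ((1 - t) * u + t * v) = (1 - t) * (a + s * u) + t * (a + s * v)"
      by (simp add: algebra_simps)
    then show "ereal (a + s * ((1 - t) * u + t * v))
        \<le> ereal (1 - t) * ereal (a + s * u) + ereal t * ereal (a + s * v)"
      by simp
  qed (use assms in auto)
  then show ?thesis using NF_upper assms by blast
qed

lemma convex_combination_in_interval:
  fixes N :: real
  assumes "0 \<le> t" "t \<le> 1" "0 \<le> u" "u \<le> N" "0 \<le> v" "v \<le> N"
  shows "0 \<le> (1 - t) * u + t * v" "(1 - t) * u + t * v \<le> N"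
proof -
  have "(1 - t) * u \<le> (1 - t) * N" "t * v \<le> t * N"
    using assms by (intro mult_left_mono; simp)+
  then show "(1 - t) * u + t * v \<le> N" by (simp add: algebra_simps)
  show "0 \<le> (1 - t) * u + t * v" using assms by simp
qed

lemma NF_convex:
  assumes "0 \<le> x" "x \<le> real (degree Q)" "0 \<le> y" "y \<le> real (degree Q)" "0 \<le> t" "t \<le> 1"
  shows "NF val Q ((1 - t) * x + t * y) \<le> ereal (1 - t) * NF val Q x + ereal t * NF val Q y"
proof (rule NF_least)
  show "0 \<le> (1 - t) * x + t * y" "(1 - t) * x + t * y \<le> real (degree Q)"
    using convex_combination_in_interval assms by blast+
  fix g assume g: "NF_minorant Q g"
  have "g ((1 - t) * x + t * y) \<le> ereal (1 - t) * g x + ereal t * g y"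
    using g assms unfolding NF_minorant_def convex_on_ereal_def by auto
  also have "\<dots> \<le> ereal (1 - t) * NF val Q x + ereal t * NF val Q y"
    using assms NF_upper[OF _ _ g] by (intro add_mono ereal_mult_left_mono) auto
  finally show "g ((1 - t) * x + t * y) \<le> ereal (1 - t) * NF val Q x + ereal t * NF val Q y" .
qed

lemma NF_le_interpolation:
  assumes "i \<le> degree Q" "k \<le> degree Q" "0 \<le> t" "t \<le> 1"
  shows "NF val Q ((1 - t) * real i + t * real k) \<le> ereal (1 - t) * val (coeff Q i) + ereal t * val (coeff Q k)"
proof (rule NF_least)
  show "0 \<le> (1 - t) * real i + t * real k" "(1 - t) * real i + t * real k \<le> real (degree Q)"
    using convex_combination_in_interval[of t "real i" "real (degree Q)" "real k"] assms by simp_all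
  fix g assume g: "NF_minorant Q g"
  have "g ((1 - t) * real i + t * real k) \<le> ereal (1 - t) * g (real i) + ereal t * g (real k)"
    using g assms unfolding NF_minorant_def convex_on_ereal_def by auto
  also have "\<dots> \<le> ereal (1 - t) * val (coeff Q i) + ereal t * val (coeff Q k)"
    using assms g unfolding NF_minorant_def by (intro add_mono ereal_mult_left_mono) auto
  finally show "g ((1 - t) * real i + t * real k) \<le> ereal (1 - t) * val (coeff Q i) + ereal t * val (coeff Q k)" .
qed

lemma NF_le_val_coeff: "i \<le> degree Q \<Longrightarrow> NF val Q (real i) \<le> val (coeff Q i)"
  using NF_le_interpolation[of i Q i 0] by (simp add: zero_ereal_def[symmetric])

lemma NF_le_chord:
  assumes "i \<le> degree Q" "k \<le> degree Q" "real i \<le> x" "x \<le> real k" "i < k"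
    and "val (coeff Q i) = ereal yi" "val (coeff Q k) = ereal yk"
  shows "NF val Q x \<le> ereal (yi + (yk - yi) * (x - real i) / (real k - real i))"
proof -
  define t where "t = (x - real i) / (real k - real i)"
  have t: "0 \<le> t" "t \<le> 1" using assms unfolding t_def by (auto simp: divide_le_eq)
  have "t * (real k - real i) = x - real i" using assms unfolding t_def by simp
  then have x: "x = (1 - t) * real i + t * real k" by (simp add: algebra_simps)
  have "NF val Q x \<le> ereal (1 - t) * ereal yi + ereal t * ereal yk"
    using NF_le_interpolation[OF assms(1,2) t] x assms by simp
  also have "\<dots> = ereal (yi + (yk - yi) * (x - real i) / (real k - real i))"
    unfolding t_def by (simp add: algebra_simps add_divide_distrib diff_divide_distrib)
  finally show ?thesis .
qed

lemma NF_sum_le_sum_ends: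
  assumes "0 \<le> u" "u \<le> p" "p \<le> w" "w \<le> real (degree Q)"
    and "NF val Q u = ereal a" "NF val Q w = ereal b"
  shows "NF val Q p + NF val Q (u + w - p) \<le> ereal (a + b)"
proof (cases "u = w")
  case True
  then show ?thesis using assms by simp
next
  case False
  define t where "t = (p - u) / (w - u)"
  have t: "0 \<le> t" "t \<le> 1" using assms False unfolding t_def by (auto simp: divide_le_eq)
  have "t * (w - u) = p - u" using False unfolding t_def by simp
  then have p: "p = (1 - t) * u + t * w" and q: "u + w - p = (1 - (1 - t)) * u + (1 - t) * w"
    by (simp_all add: algebra_simps)
  have "NF val Q p \<le> ereal ((1 - t) * a + t * b)"
    using NF_convex[of u Q w t] assms t unfolding p by simp
  moreover have "NF val Q (u + w - p) \<le> ereal (t * a + (1 - t) * b)"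
    using NF_convex[of u Q w "1 - t"] assms t unfolding q by simp
  ultimately have "NF val Q p + NF val Q (u + w - p) \<le> ereal ((1 - t) * a + t * b) + ereal (t * a + (1 - t) * b)"
    by (rule add_mono)
  also have "\<dots> = ereal (a + b)" by (simp add: algebra_simps)
  finally show ?thesis .
qed

text \<open>Left of the first nonzero coefficient, arbitrarily steep lines through it lie below the
  Newton polygon.\<close>

lemma NF_infinite_left_of_support:
  assumes "Q \<noteq> 0" "0 \<le> x" and left: "\<forall>j\<le>degree Q. coeff Q j \<noteq> 0 \<longrightarrow> x < real j"
  shows "NF val Q x = \<infinity>"
proof (rule ereal_top)
  fix M :: real
  define C where "C = {j. j \<le> degree Q \<and> coeff Q j \<noteq> 0}"
  define h where "h j = real_of_ereal (val (coeff Q j))" for j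
  define m where "m = Min C"
  define c where "c = Min (h ` C)"
  have C: "finite C" "degree Q \<in> C" unfolding C_def using \<open>Q \<noteq> 0\<close> by auto
  then have "m \<in> C" unfolding m_def by (intro Min_in) auto
  then have xm: "x < real m" "x \<le> real (degree Q)"
    using left C_def C(2) by auto
  define K where "K = max 0 ((M - c) / (real m - x))"
  have "(M - c) / (real m - x) \<le> K" unfolding K_def by simp
  then have KM: "M - c \<le> K * (real m - x)" using xm by (simp add: divide_le_eq)
  have "ereal (c + K * real m + (- K) * real j) \<le> val (coeff Q j)" if "j \<le> degree Q" for j
  proof (cases "coeff Q j = 0")
    case False
    then have "j \<in> C" unfolding C_def using that by simp
    then have "m \<le> j" "c \<le> h j" using C unfolding m_def c_def by simp_all
    moreover have "0 \<le> K" unfolding K_def by simp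
    ultimately have "K * real m \<le> K * real j" by (simp add: mult_left_mono)
    with \<open>c \<le> h j\<close> have "c + K * real m + (- K) * real j \<le> h j" by simp
    then show ?thesis using val_eq_ereal_real[OF False] unfolding h_def by (metis ereal_less_eq(3))
  qed simp
  then have "ereal (c + K * real m + (- K) * x) \<le> NF val Q x"
    using NF_ge_line xm \<open>0 \<le> x\<close> by blast
  moreover have "M \<le> c + K * real m + (- K) * x" using KM by (simp add: algebra_simps)
  ultimately show "ereal M \<le> NF val Q x" by (meson ereal_less_eq(3) order_trans)
qed

lemma NF_supported:
  assumes "Q \<noteq> 0" "0 \<le> x" "x \<le> real (degree Q)" "NF val Q x \<noteq> \<infinity>"
  obtains i k t a s where "i \<le> k" "k \<le> degree Q" "0 \<le> t" "t \<le> 1" "x = (1 - t) * real i + t * real k"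
    "\<forall>j\<le>degree Q. ereal (a + s * real j) \<le> val (coeff Q j)"
    "val (coeff Q i) = ereal (a + s * real i)" "val (coeff Q k) = ereal (a + s * real k)"
proof -
  define C where "C = {j. j \<le> degree Q \<and> coeff Q j \<noteq> 0}"
  define h where "h j = real_of_ereal (val (coeff Q j))" for j
  have C: "finite C" "degree Q \<in> C" unfolding C_def using \<open>Q \<noteq> 0\<close> by auto
  have val_C: "val (coeff Q j) = ereal (h j)" if "j \<in> C" for j
    using val_eq_ereal_real that unfolding C_def h_def by blast
  obtain i0 where "i0 \<in> C" "real i0 \<le> x"
    using NF_infinite_left_of_support[OF assms(1,2)] assms(4) unfolding C_def by force
  with supporting_line_through_lowest_chord[OF C(1) _ C(2) _ assms(3), of i0 h]
  obtain i k t a s where "i \<in> C" "k \<in> C" "i \<le> k" "0 \<le> t" "t \<le> 1" "x = (1 - t) * real i + t * real k"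
    and below: "\<forall>j\<in>C. a + s * real j \<le> h j" and "h i = a + s * real i" "h k = a + s * real k"
    by blast
  moreover have "\<forall>j\<le>degree Q. ereal (a + s * real j) \<le> val (coeff Q j)"
  proof (intro allI impI)
    fix j assume "j \<le> degree Q"
    then show "ereal (a + s * real j) \<le> val (coeff Q j)"
      using below val_C by (cases "coeff Q j = 0") (auto simp: C_def)
  qed
  ultimately show ?thesis
    using that[of i k t a s] val_C C_def by simp
qed

end

section \<open>The Newton iteration\<close>

text \<open>\<open>\<psi> j\<close> stands for \<open>NF(P)(j)\<close> with \<open>j < d\<close>, \<open>\<sigma>\<close> for the slope of \<open>NF(P)\<close> on \<open>[d - 1, d]\<close> and
  \<open>v\<close> for \<open>val a\<^sub>d\<close>; the assumptions are all the iteration needs to know about \<open>NF(P)\<close>.\<close>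

locale slope_factorization = valued_field val for val :: "'a::field \<Rightarrow> ereal" +
  fixes P :: "'a poly" and d :: nat and \<psi> :: "nat \<Rightarrow> ereal" and \<sigma> v \<kappa> :: real
  assumes d_pos: "1 \<le> d" and d_less_degree: "d < degree P"
    and val_lead: "val (coeff P d) = ereal v"
    and \<psi>_le_val: "\<forall>j<d. \<psi> j \<le> val (coeff P j)"
    and \<psi>_last: "\<psi> (d - 1) = ereal (v - \<sigma>)"
    and \<psi>_slope: "\<forall>j. 1 \<le> j \<longrightarrow> j < d \<longrightarrow> \<psi> j \<le> \<psi> (j - 1) + ereal \<sigma>"
    and \<psi>_above_line: "\<forall>j<d. ereal (v - \<sigma> * real d + \<sigma> * real j) \<le> \<psi> j"
    and val_high: "\<forall>k>d. ereal (v + (\<sigma> + \<kappa>) * (real k - real d)) \<le> val (coeff P k)"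
    and \<kappa>_pos: "\<kappa> > 0"
begin

definition "intercept = v - \<sigma> * real d"

abbreviation "ad \<equiv> coeff P d"

lemma ad_nonzero: "ad \<noteq> 0"
  using val_lead by auto

definition above_\<psi> :: "real \<Rightarrow> 'a poly \<Rightarrow> bool" where
  "above_\<psi> c Q \<longleftrightarrow> degree Q < d \<and> (\<forall>j<d. \<psi> j + ereal c \<le> val (coeff Q j))"

definition candidate :: "'a poly \<Rightarrow> bool" where
  "candidate A \<longleftrightarrow> degree A = d \<and> coeff A d = ad \<and> (\<forall>j<d. \<psi> j \<le> val (coeff A j))"

lemma above_\<psi>_0 [simp]: "above_\<psi> c 0"
  using d_pos by (simp add: above_\<psi>_def)

lemma above_\<psi>_add: "above_\<psi> c p \<Longrightarrow> above_\<psi> c q \<Longrightarrow> above_\<psi> c (p + q)"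
  unfolding above_\<psi>_def using degree_add_le_max[of p q] by (auto intro!: val_add_ge)

lemma above_\<psi>_minus: "above_\<psi> c p \<Longrightarrow> above_\<psi> c (- p)"
  unfolding above_\<psi>_def by auto

lemma above_\<psi>_diff: "above_\<psi> c p \<Longrightarrow> above_\<psi> c q \<Longrightarrow> above_\<psi> c (p - q)"
  using above_\<psi>_add[of c p "- q"] above_\<psi>_minus[of c q] by simp

lemma above_\<psi>_mono: "above_\<psi> c p \<Longrightarrow> c' \<le> c \<Longrightarrow> above_\<psi> c' p"
  unfolding above_\<psi>_def by (meson add_left_mono ereal_less_eq(3) order_trans)

lemma above_\<psi>_smult:
  assumes "above_\<psi> c p" "ereal e \<le> val a"
  shows "above_\<psi> (c + e) (smult a p)"
  unfolding above_\<psi>_def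
proof (intro conjI allI impI)
  show "degree (smult a p) < d"
    using assms degree_smult_le[of a p] unfolding above_\<psi>_def by linarith
  fix j assume "j < d"
  then have "\<psi> j + ereal c + ereal e \<le> val (coeff p j) + val a"
    using assms unfolding above_\<psi>_def by (intro add_mono) auto
  then have "\<psi> j + ereal (c + e) \<le> val (coeff p j) + val a"
    by (simp add: add.assoc)
  then show "\<psi> j + ereal (c + e) \<le> val (coeff (smult a p) j)"
    by (simp add: val_mult add.commute)
qed

lemma above_\<psi>_imp_above_line: "above_\<psi> c Q \<Longrightarrow> above_line \<sigma> (intercept + c) Q"
  unfolding above_line_def
proof
  fix k assume Q: "above_\<psi> c Q"
  show "ereal (intercept + c + \<sigma> * real k) \<le> val (coeff Q k)"
  proof (cases "k < d")
    case True
    have "ereal (intercept + c + \<sigma> * real k) = ereal (v - \<sigma> * real d + \<sigma> * real k) + ereal c"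
      by (simp add: intercept_def)
    also have "\<dots> \<le> \<psi> k + ereal c" using \<psi>_above_line True by (intro add_mono) auto
    also have "\<dots> \<le> val (coeff Q k)" using Q True unfolding above_\<psi>_def by auto
    finally show ?thesis .
  next
    case False
    then have "coeff Q k = 0" using Q unfolding above_\<psi>_def by (simp add: coeff_eq_0)
    then show ?thesis by simp
  qed
qed

lemma candidate_nonzero: "candidate A \<Longrightarrow> A \<noteq> 0"
  using ad_nonzero unfolding candidate_def by auto

lemma candidate_above_line: "candidate A \<Longrightarrow> above_line \<sigma> intercept A"
  unfolding above_line_def
proof
  fix k assume A: "candidate A"
  consider "k < d" | "k = d" | "d < k" by linarith
  then show "ereal (intercept + \<sigma> * real k) \<le> val (coeff A k)"
  proof cases
    case 1
    then show ?thesis using A \<psi>_above_line unfolding candidate_def intercept_def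
      by (metis (no_types, lifting) add.commute diff_add_eq order_trans)
  next
    case 2
    then show ?thesis using A val_lead unfolding candidate_def intercept_def by simp
  next
    case 3
    then show ?thesis using A unfolding candidate_def by (simp add: coeff_eq_0)
  qed
qed

lemma candidate_mod_div:
  "candidate A \<Longrightarrow> above_line \<sigma> c R \<Longrightarrow> above_line \<sigma> c (R mod A) \<and> above_line \<sigma> (c - intercept) (R div A)"
  using above_line_mod_div[of A d intercept \<sigma> c R] candidate_above_line[of A] val_lead
  unfolding candidate_def intercept_def by auto

lemma above_line_P: "above_line \<sigma> intercept P"
  unfolding above_line_def
proof
  fix k
  consider "k < d" | "k = d" | "d < k" by linarith
  then show "ereal (intercept + \<sigma> * real k) \<le> val (coeff P k)"
  proof cases
    case 1
    then show ?thesis using \<psi>_above_line \<psi>_le_val unfolding intercept_def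
      by (metis (no_types, lifting) add.commute diff_add_eq order_trans)
  next
    case 2
    then show ?thesis using val_lead unfolding intercept_def by simp
  next
    case 3
    then have "intercept + \<sigma> * real k \<le> v + (\<sigma> + \<kappa>) * (real k - real d)"
      using \<kappa>_pos unfolding intercept_def by (simp add: algebra_simps)
    then show ?thesis using val_high 3 by (meson ereal_less_eq(3) order_trans)
  qed
qed

lemma above_line_div_P: "candidate A \<Longrightarrow> above_line \<sigma> 0 (P div A)"
  using candidate_mod_div[OF _ above_line_P, of A] by simp

lemma val_top_coeff_quotient:
  assumes "above_\<psi> c Q"
  shows "ereal (c - \<sigma>) \<le> val (coeff Q (d - 1) / ad)"
proof -
  have "\<psi> (d - 1) + ereal c \<le> val (coeff Q (d - 1))"
    using assms d_pos unfolding above_\<psi>_def by auto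
  then have "ereal (v - \<sigma> + c) + ereal (- v) \<le> val (coeff Q (d - 1)) + ereal (- v)"
    using \<psi>_last by (intro add_right_mono) simp
  moreover have "val (coeff Q (d - 1) / ad) = val (coeff Q (d - 1)) + ereal (- v)"
    using ad_nonzero val_lead by (simp add: divide_inverse val_mult val_inverse)
  ultimately show ?thesis by simp
qed

lemma above_\<psi>_shift:
  assumes Q: "above_\<psi> c Q" and j: "j < d"
  shows "\<psi> j + ereal (c - \<sigma>) \<le> val (coeff (pCons 0 Q) j)"
proof (cases j)
  case (Suc i)
  have "\<psi> j + ereal (c - \<sigma>) \<le> \<psi> (j - 1) + ereal \<sigma> + ereal (c - \<sigma>)"
    using \<psi>_slope j Suc by (intro add_right_mono) auto
  also have "\<dots> = \<psi> (j - 1) + ereal c" by (simp add: add.assoc)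
  also have "\<dots> \<le> val (coeff Q i)" using Q j Suc unfolding above_\<psi>_def by auto
  finally show ?thesis using Suc by simp
qed simp

text \<open>The coefficient of \<open>X\<^sup>d\<close> in \<open>X Q\<close> is cancelled by a multiple of \<open>A\<close> with a scalar of
  valuation at least \<open>c - \<sigma>\<close>, since \<open>\<psi> (d - 1) = v - \<sigma>\<close>.\<close>

lemma above_\<psi>_shift_mod:
  assumes A: "candidate A" and Q: "above_\<psi> c Q"
  shows "above_\<psi> (c - \<sigma>) (pCons 0 Q mod A)"
proof -
  define q where "q = coeff Q (d - 1) / ad"
  define T where "T = pCons 0 Q - smult q A"
  have dA: "degree A = d" and cA: "coeff A d = ad" and \<psi>A: "\<forall>j<d. \<psi> j \<le> val (coeff A j)"
    using A unfolding candidate_def by auto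
  have "degree T \<le> d"
    unfolding T_def using Q dA
    by (intro degree_diff_le) (auto simp: above_\<psi>_def degree_pCons_le intro: order_trans[OF degree_smult_le])
  moreover have "coeff T d = 0"
    unfolding T_def q_def using d_pos ad_nonzero cA by (cases d) auto
  ultimately have dT: "degree T < d"
    using eq_zero_or_degree_less[of T d] d_pos by auto
  have "pCons 0 Q = T + [:q:] * A" unfolding T_def by simp
  then have "pCons 0 Q mod A = T"
    using dT dA by (metis mod_mult_self1 mod_poly_less)
  moreover have "above_\<psi> (c - \<sigma>) T"
    unfolding above_\<psi>_def
  proof (intro conjI allI impI)
    show "degree T < d" by fact
    fix j assume j: "j < d"
    have "ereal (c - \<sigma>) + \<psi> j \<le> val q + val (coeff A j)"
      using val_top_coeff_quotient[OF Q] \<psi>A j unfolding q_def by (intro add_mono) auto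
    then have "\<psi> j + ereal (c - \<sigma>) \<le> val (q * coeff A j)"
      by (simp add: val_mult add.commute)
    then show "\<psi> j + ereal (c - \<sigma>) \<le> val (coeff T j)"
      using above_\<psi>_shift[OF Q] j unfolding T_def by (simp add: val_diff_ge)
  qed
  ultimately show ?thesis by simp
qed

lemma above_\<psi>_mult_mod:
  assumes A: "candidate A" and Q: "above_\<psi> c Q"
  shows "above_line \<sigma> e E \<Longrightarrow> above_\<psi> (c + e) (E * Q mod A)"
proof (induction E arbitrary: e rule: pCons_induct)
  case (pCons a E)
  obtain va: "ereal e \<le> val a" and E: "above_line \<sigma> (e + \<sigma>) E"
    using above_line_pCons[OF pCons.prems] by blast
  have aQ: "above_\<psi> (c + e) (smult a Q)" using above_\<psi>_smult[OF Q va] .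
  have "above_\<psi> (c + (e + \<sigma>) - \<sigma>) (pCons 0 (E * Q mod A) mod A)"
    using above_\<psi>_shift_mod[OF A pCons.IH[OF E]] .
  then have XEQ: "above_\<psi> (c + e) (pCons 0 (E * Q) mod A)"
    by (simp add: algebra_simps pCons_0_mod[of "E * Q"])
  have "smult a Q mod A = smult a Q"
    using aQ A unfolding above_\<psi>_def candidate_def by (simp add: mod_poly_less)
  moreover have "pCons a E * Q = smult a Q + pCons 0 (E * Q)" by (simp add: mult_pCons_left)
  ultimately have "pCons a E * Q mod A = smult a Q + pCons 0 (E * Q) mod A"
    by (simp add: poly_mod_add_left)
  then show ?case using above_\<psi>_add[OF aQ XEQ] by simp
qed simp

definition newton_inv :: "'a poly \<Rightarrow> 'a poly \<Rightarrow> real \<Rightarrow> bool" where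
  "newton_inv A V e \<longleftrightarrow> candidate A \<and> above_line \<sigma> 0 V \<and> above_\<psi> e (P mod A)
     \<and> above_line \<sigma> e ((P div A * V - 1) mod A)"

lemma correction_above_\<psi>:
  assumes "newton_inv A V e"
  shows "above_\<psi> e (V * P mod A)"
proof -
  have "V * P mod A = V * (P mod A) mod A" by (simp add: mod_mult_right_eq)
  then show ?thesis
    using above_\<psi>_mult_mod[of A e "P mod A" 0 V] assms unfolding newton_inv_def by simp
qed

lemma candidate_add:
  assumes A: "candidate A" and \<delta>: "above_\<psi> e \<delta>" and "0 \<le> e"
  shows "candidate (A + \<delta>)"
  unfolding candidate_def
proof (intro conjI allI impI)
  have "degree \<delta> < d" "degree A = d"
    using A \<delta> unfolding candidate_def above_\<psi>_def by auto
  then show "degree (A + \<delta>) = d" "coeff (A + \<delta>) d = ad"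
    using A unfolding candidate_def by (auto simp: degree_add_eq_left coeff_eq_0)
  fix j assume j: "j < d"
  have "\<psi> j \<le> \<psi> j + ereal e" using \<open>0 \<le> e\<close> by (cases "\<psi> j") auto
  also have "\<dots> \<le> val (coeff \<delta> j)" using \<delta> j unfolding above_\<psi>_def by auto
  finally show "\<psi> j \<le> val (coeff (A + \<delta>) j)"
    using A j unfolding candidate_def by (simp add: val_add_ge)
qed

lemma newton_inv_quotient_error:
  assumes "newton_inv A V e"
  shows "above_line \<sigma> (- intercept) ((P div A * V - 1) div A)"
proof -
  have A: "candidate A" and V: "above_line \<sigma> 0 V"
    using assms unfolding newton_inv_def by auto
  have "above_line \<sigma> (0 + 0) (P div A * V)"
    using above_line_mult[OF above_line_div_P[OF A] V] .
  then have "above_line \<sigma> 0 (P div A * V - 1)"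
    using above_line_diff above_line_1[where c = 0] by simp
  then show ?thesis using candidate_mod_div[OF A] by fastforce
qed

text \<open>By \<open>P_eq\<close> below, the new remainder is a combination of products of two quantities of
  size \<open>e\<close>: this is why the precision doubles.\<close>

lemma newton_step_remainder:
  assumes inv: "newton_inv A V e" and "0 \<le> e"
  shows "above_\<psi> (2 * e) (P mod (A + V * P mod A))"
proof -
  define R Q F \<delta> where "R = P mod A" and "Q = P div A" and "F = (Q * V - 1) mod A"
    and "\<delta> = V * P mod A"
  define c k where "c = V * R div A" and "k = (Q * V - 1) div A"
  define W where "W = Q * c - R * k"
  have A: "candidate A" and V: "above_line \<sigma> 0 V" and R: "above_\<psi> e R" and F: "above_line \<sigma> e F"
    using inv unfolding newton_inv_def R_def Q_def F_def by auto
  have \<delta>: "above_\<psi> e \<delta>" unfolding \<delta>_def using correction_above_\<psi>[OF inv] .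
  have A': "candidate (A + \<delta>)" using candidate_add[OF A \<delta> \<open>0 \<le> e\<close>] .
  have "\<delta> = V * R mod A" unfolding \<delta>_def R_def by (simp add: mod_mult_right_eq)
  then have \<delta>_eq: "\<delta> = V * R - c * A" unfolding c_def by (simp add: minus_div_mult_eq_mod)
  have F_eq: "F = Q * V - 1 - k * A"
    unfolding F_def k_def by (simp add: minus_div_mult_eq_mod[symmetric])
  have "P = Q * A + R" unfolding Q_def R_def by simp
  also have "\<dots> = (- (F * R) - W * \<delta>) + (Q + W) * (A + \<delta>)"
    unfolding W_def \<delta>_eq F_eq by (rule newton_remainder_identity)
  finally have P_eq: "P = (- (F * R) - W * \<delta>) + (Q + W) * (A + \<delta>)" .
  have rem: "P mod (A + \<delta>) = - (F * R mod (A + \<delta>)) - W * \<delta> mod (A + \<delta>)"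
    by (subst P_eq, simp only: mod_mult_self1) (simp add: poly_mod_diff_left)
  have Q: "above_line \<sigma> 0 Q" unfolding Q_def using above_line_div_P[OF A] .
  have "above_line \<sigma> (0 + (intercept + e)) (V * R)"
    using above_line_mult[OF V above_\<psi>_imp_above_line[OF R]] .
  then have c: "above_line \<sigma> e c"
    unfolding c_def using candidate_mod_div[OF A, of "intercept + e" "V * R"] by simp
  have k: "above_line \<sigma> (- intercept) k"
    unfolding k_def Q_def using newton_inv_quotient_error[OF inv] .
  have "above_line \<sigma> (intercept + e + - intercept) (R * k)"
    using above_line_mult[OF above_\<psi>_imp_above_line[OF R] k] .
  moreover have "above_line \<sigma> (0 + e) (Q * c)" using above_line_mult[OF Q c] .
  ultimately have W: "above_line \<sigma> e W"
    unfolding W_def by (simp add: above_line_diff)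
  have "above_\<psi> (e + e) (F * R mod (A + \<delta>))" using above_\<psi>_mult_mod[OF A' R F] .
  moreover have "above_\<psi> (e + e) (W * \<delta> mod (A + \<delta>))" using above_\<psi>_mult_mod[OF A' \<delta> W] .
  ultimately have "above_\<psi> (2 * e) (P mod (A + \<delta>))"
    unfolding rem mult_2 by (intro above_\<psi>_diff above_\<psi>_minus)
  then show ?thesis by (simp only: \<delta>_def)
qed

lemma newton_step_quotient_change:
  assumes inv: "newton_inv A V e" and "0 \<le> e"
  defines "A' \<equiv> A + V * P mod A"
  shows "above_line \<sigma> e (P div A' - P div A)"
proof -
  define R where "R = P mod A"
  define Q where "Q = P div A"
  define \<delta> where "\<delta> = V * P mod A"
  have A: "candidate A" and R: "above_\<psi> e R"
    using inv unfolding newton_inv_def R_def by auto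
  have \<delta>: "above_\<psi> e \<delta>" unfolding \<delta>_def using correction_above_\<psi>[OF inv] .
  have A'_eq: "A' = A + \<delta>" unfolding A'_def \<delta>_def ..
  have A': "candidate A'" unfolding A'_eq using candidate_add[OF A \<delta> \<open>0 \<le> e\<close>] .
  have "P div A' * A' + P mod A' = Q * A + R" unfolding Q_def R_def by simp
  then have "(P div A' - Q) * A' = R - Q * \<delta> - P mod A'"
    unfolding A'_eq by (simp add: algebra_simps)
  then have eq: "P div A' - Q = (R - Q * \<delta> - P mod A') div A'"
    using candidate_nonzero[OF A'] by (metis nonzero_mult_div_cancel_right)
  have "above_line \<sigma> (0 + (intercept + e)) (Q * \<delta>)"
    using above_line_mult[OF above_line_div_P[OF A] above_\<psi>_imp_above_line[OF \<delta>]]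
    unfolding Q_def .
  moreover have "above_line \<sigma> (intercept + 2 * e) (P mod A')"
    unfolding A'_def using above_\<psi>_imp_above_line[OF newton_step_remainder[OF inv \<open>0 \<le> e\<close>]] .
  then have "above_line \<sigma> (intercept + e) (P mod A')"
    by (rule above_line_mono) (simp add: \<open>0 \<le> e\<close>)
  ultimately have "above_line \<sigma> (intercept + e) (R - Q * \<delta> - P mod A')"
    using above_\<psi>_imp_above_line[OF R] by (simp add: above_line_diff)
  then show ?thesis
    unfolding Q_def[symmetric] eq using candidate_mod_div[OF A', of "intercept + e"] by simp
qed

text \<open>The update of \<open>V\<close> is Newton's iteration for an inverse of \<open>B' = P div A'\<close>:
  \<open>B' (2 V - V\<^sup>2 B') - 1 = - (B' V - 1)\<^sup>2\<close>.\<close>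

lemma newton_step_inverse:
  assumes inv: "newton_inv A V e" and "0 \<le> e"
  defines "A' \<equiv> A + V * P mod A"
  shows "above_line \<sigma> (2 * e) ((P div A' * ((2 * V - V\<^sup>2 * (P div A')) mod A') - 1) mod A')"
proof -
  define Q where "Q = P div A"
  define \<delta> where "\<delta> = V * P mod A"
  define k where "k = (Q * V - 1) div A"
  define B' where "B' = P div A'"
  have A: "candidate A" and V: "above_line \<sigma> 0 V"
    and F: "above_line \<sigma> e ((Q * V - 1) mod A)"
    using inv unfolding newton_inv_def Q_def by auto
  have \<delta>: "above_\<psi> e \<delta>" unfolding \<delta>_def using correction_above_\<psi>[OF inv] .
  have A'_eq: "A' = A + \<delta>" unfolding A'_def \<delta>_def ..
  have A': "candidate A'" unfolding A'_eq using candidate_add[OF A \<delta> \<open>0 \<le> e\<close>] .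
  have k: "above_line \<sigma> (- intercept) k" unfolding k_def Q_def using newton_inv_quotient_error[OF inv] .
  have BQ: "above_line \<sigma> e (B' - Q)"
    unfolding B'_def Q_def A'_def using newton_step_quotient_change[OF inv \<open>0 \<le> e\<close>] .
  define G where "G = (B' * V - 1) mod A'"
  have "B' * V - 1 = ((B' - Q) * V + ((Q * V - 1) mod A) - k * \<delta>) + k * A'"
    unfolding A'_eq k_def by (simp add: algebra_simps minus_div_mult_eq_mod[symmetric])
  then have G_eq: "G = ((B' - Q) * V + ((Q * V - 1) mod A) - k * \<delta>) mod A'"
    unfolding G_def by (metis mod_mult_self1)
  have "above_line \<sigma> (e + 0) ((B' - Q) * V)" using above_line_mult[OF BQ V] .
  moreover have "above_line \<sigma> (- intercept + (intercept + e)) (k * \<delta>)"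
    using above_line_mult[OF k above_\<psi>_imp_above_line[OF \<delta>]] .
  ultimately have "above_line \<sigma> e ((B' - Q) * V + ((Q * V - 1) mod A) - k * \<delta>)"
    using F by (simp add: above_line_add above_line_diff)
  then have G: "above_line \<sigma> e G"
    unfolding G_eq using candidate_mod_div[OF A'] by blast
  have "(B' * ((2 * V - V\<^sup>2 * B') mod A') - 1) mod A' = (B' * (2 * V - V\<^sup>2 * B') - 1) mod A'"
    by (metis mod_diff_left_eq mod_mult_right_eq)
  also have "B' * (2 * V - V\<^sup>2 * B') - 1 = - ((B' * V - 1) * (B' * V - 1))"
    by (simp add: algebra_simps power2_eq_square)
  also have "- ((B' * V - 1) * (B' * V - 1)) mod A' = - (G * G mod A')"
    unfolding G_def by (simp add: mod_mult_eq)
  finally have inv_eq: "(B' * ((2 * V - V\<^sup>2 * B') mod A') - 1) mod A' = - (G * G mod A')" .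
  have "above_line \<sigma> (e + e) (G * G mod A')"
    using candidate_mod_div[OF A' above_line_mult[OF G G]] by blast
  then have "above_line \<sigma> (2 * e) (- (G * G mod A'))"
    unfolding mult_2 by (rule above_line_minus)
  then show ?thesis unfolding B'_def[symmetric] inv_eq .
qed

lemma newton_step:
  assumes inv: "newton_inv A V e" and "0 \<le> e"
  defines "A' \<equiv> A + V * P mod A"
  shows "newton_inv A' ((2 * V - V\<^sup>2 * (P div A')) mod A') (2 * e)"
proof -
  have A: "candidate A" and V: "above_line \<sigma> 0 V"
    using inv unfolding newton_inv_def by auto
  have A': "candidate A'"
    unfolding A'_def using candidate_add[OF A correction_above_\<psi>[OF inv] \<open>0 \<le> e\<close>] .
  have "above_line \<sigma> (0 + 0 + 0) (V * V * (P div A'))"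
    using above_line_mult[OF above_line_mult[OF V V] above_line_div_P[OF A']] .
  then have "above_line \<sigma> 0 (V + V - V * V * (P div A'))"
    using V by (intro above_line_diff above_line_add) simp_all
  then have "above_line \<sigma> 0 (2 * V - V\<^sup>2 * (P div A'))"
    by (simp only: mult_2 power2_eq_square)
  then have "above_line \<sigma> 0 ((2 * V - V\<^sup>2 * (P div A')) mod A')"
    using candidate_mod_div[OF A'] by blast
  then show ?thesis
    unfolding newton_inv_def A'_def
    using A'[unfolded A'_def] newton_step_remainder[OF assms(1,2)]
      newton_step_inverse[OF assms(1,2)] by simp
qed

abbreviation "A0 \<equiv> (\<Sum>i\<le>d. monom (coeff P i) i)"

lemma candidate_A0: "candidate A0"
  unfolding candidate_def
proof (intro conjI allI impI)
  show "degree A0 = d"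
    by (intro antisym degree_le le_degree) (auto simp: coeff_truncation ad_nonzero)
  show "coeff A0 d = ad" by (simp add: coeff_truncation)
  fix j assume "j < d"
  then show "\<psi> j \<le> val (coeff A0 j)" using \<psi>_le_val by (simp add: coeff_truncation)
qed

lemma P_eq_A0_plus_shift: "P = A0 + monom 1 d * poly_shift d (P - A0)"
  by (rule poly_eqI) (auto simp: coeff_monom_mult coeff_truncation coeff_poly_shift)

lemma above_line_poly_shift: "above_line \<sigma> (v + \<kappa>) (poly_shift d (P - A0))"
  unfolding above_line_def
proof
  fix m
  show "ereal (v + \<kappa> + \<sigma> * real m) \<le> val (coeff (poly_shift d (P - A0)) m)"
  proof (cases m)
    case 0
    then show ?thesis by (simp add: coeff_truncation coeff_poly_shift)
  next
    case (Suc m')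
    then have "ereal (v + \<kappa> + \<sigma> * real m) \<le> ereal (v + (\<sigma> + \<kappa>) * (real (m + d) - real d))"
      using \<kappa>_pos by (simp add: algebra_simps)
    also have "\<dots> \<le> val (coeff P (m + d))"
      by (rule val_high[rule_format]) (use Suc in simp)
    finally show ?thesis
      using Suc by (simp add: coeff_truncation coeff_poly_shift)
  qed
qed

text \<open>The polynomial below is \<open>X\<^sup>d mod A0\<close>.\<close>

lemma above_\<psi>_X_power_mod_A0: "above_\<psi> (- v) (monom 1 d - smult (inverse ad) A0)"
  (is "above_\<psi> _ ?T")
  unfolding above_\<psi>_def
proof (intro conjI allI impI)
  have "degree ?T \<le> d"
    using candidate_A0 unfolding candidate_def
    by (metis degree_diff_le degree_monom_le degree_smult_le)
  moreover have "coeff ?T d = 0" using ad_nonzero by (simp add: coeff_truncation)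
  ultimately show "degree ?T < d"
    using eq_zero_or_degree_less[of ?T d] d_pos by auto
  fix j assume j: "j < d"
  have "\<psi> j + ereal (- v) \<le> val (coeff P j) + ereal (- v)"
    using \<psi>_le_val j by (intro add_right_mono) auto
  moreover have "val (coeff ?T j) = val (coeff P j) + ereal (- v)"
    using j ad_nonzero val_lead by (simp add: coeff_truncation val_mult val_inverse add.commute)
  ultimately show "\<psi> j + ereal (- v) \<le> val (coeff ?T j)" by simp
qed

lemma newton_inv_A0: "newton_inv A0 1 \<kappa>"
proof -
  define H where "H = poly_shift d (P - A0)"
  define T where "T = monom 1 d - smult (inverse ad) A0"
  have H: "above_line \<sigma> (v + \<kappa>) H" unfolding H_def by (rule above_line_poly_shift)
  have T: "above_\<psi> (- v) T" unfolding T_def by (rule above_\<psi>_X_power_mod_A0)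
  have "P = A0 + H * (T + [:inverse ad:] * A0)"
    using P_eq_A0_plus_shift unfolding H_def T_def by (simp add: mult.commute)
  then have P_eq: "P = H * T + (1 + H * [:inverse ad:]) * A0"
    by (simp add: algebra_simps)
  have "above_\<psi> (- v + (v + \<kappa>)) (H * T mod A0)"
    using above_\<psi>_mult_mod[OF candidate_A0 T H] .
  then have rem: "above_\<psi> \<kappa> (P mod A0)"
    by (subst P_eq) (simp only: mod_mult_self1, simp)
  have "ereal (- v) \<le> val (inverse ad)"
    using ad_nonzero val_lead by (simp add: val_inverse)
  then have "above_line \<sigma> (v + \<kappa> + - v) (H * [:inverse ad:])"
    using above_line_mult[OF H above_line_const] by blast
  moreover have "above_line \<sigma> (v + \<kappa> + (intercept + - v)) (H * T)"
    using above_line_mult[OF H above_\<psi>_imp_above_line[OF T]] .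
  then have "above_line \<sigma> \<kappa> (H * T div A0)"
    using candidate_mod_div[OF candidate_A0, of "intercept + \<kappa>" "H * T"] by (simp add: algebra_simps)
  ultimately have "above_line \<sigma> \<kappa> (H * [:inverse ad:] + H * T div A0)"
    by (simp add: above_line_add)
  moreover have "P div A0 * 1 - 1 = H * [:inverse ad:] + H * T div A0"
    using candidate_nonzero[OF candidate_A0] by (subst P_eq) (simp add: div_mult_self1)
  ultimately have "above_line \<sigma> \<kappa> ((P div A0 * 1 - 1) mod A0)"
    using candidate_mod_div[OF candidate_A0] by simp
  then show ?thesis
    unfolding newton_inv_def using candidate_A0 rem above_line_1[where c = 0] by simp
qed

lemma newton_inv_A_seq: "newton_inv (A_seq P d i) (V_seq P d i) (2 ^ i * \<kappa>)"
proof (induction i)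
  case 0
  then show ?case using newton_inv_A0 by (simp add: A_seq_0 V_seq_0)
next
  case (Suc i)
  have "newton_inv (A_seq P d (Suc i)) (V_seq P d (Suc i)) (2 * (2 ^ i * \<kappa>))"
    unfolding A_seq_Suc[of P d i] V_seq_Suc[of P d i]
    using newton_step[OF Suc.IH] \<kappa>_pos by (simp add: A_seq_Suc)
  then show ?case by (simp add: mult.assoc)
qed

lemma candidate_A_seq: "candidate (A_seq P d i)"
  using newton_inv_A_seq unfolding newton_inv_def by blast

lemma coeff_A_seq_high: "d \<le> j \<Longrightarrow> coeff (A_seq P d i) j = (if j = d then ad else 0)"
  using candidate_A_seq[of i] unfolding candidate_def by (auto simp: coeff_eq_0)

lemma A_seq_diff_above_\<psi>: "n \<le> m \<Longrightarrow> above_\<psi> (2 ^ n * \<kappa>) (A_seq P d m - A_seq P d n)"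
proof (induction m rule: dec_induct)
  case (step m)
  have "above_\<psi> (2 ^ m * \<kappa>) (A_seq P d (Suc m) - A_seq P d m)"
    using correction_above_\<psi>[OF newton_inv_A_seq] by (simp add: A_seq_Suc)
  then have "above_\<psi> (2 ^ n * \<kappa>) (A_seq P d (Suc m) - A_seq P d m)"
    using step.hyps \<kappa>_pos by (elim above_\<psi>_mono) (simp add: power_increasing)
  from above_\<psi>_add[OF this step.IH] show ?case by simp
qed simp

lemma \<psi>_ge_intercept_line: "j < d \<Longrightarrow> ereal (intercept + \<sigma> * real j) \<le> \<psi> j"
  using \<psi>_above_line unfolding intercept_def by auto

lemma A_seq_coeff_Cauchy:
  "\<forall>M::int. \<exists>N. \<forall>m\<ge>N. \<forall>n\<ge>N. ereal (of_int M) \<le> val (coeff (A_seq P d m) j - coeff (A_seq P d n) j)"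
proof
  fix M :: int
  show "\<exists>N. \<forall>m\<ge>N. \<forall>n\<ge>N. ereal (of_int M) \<le> val (coeff (A_seq P d m) j - coeff (A_seq P d n) j)"
  proof (cases "j < d")
    case False
    then show ?thesis using coeff_A_seq_high[of j] by simp
  next
    case True
    obtain N where N: "\<forall>n\<ge>N. of_int M - (intercept + \<sigma> * real j) \<le> 2 ^ n * \<kappa>"
      using eventually_le_two_power_mult[OF \<kappa>_pos] by blast
    have bound: "ereal (of_int M) \<le> val (coeff (A_seq P d m) j - coeff (A_seq P d n) j)"
      if "N \<le> n" "n \<le> m" for m n
    proof -
      have "ereal (of_int M) \<le> ereal (intercept + \<sigma> * real j) + ereal (2 ^ n * \<kappa>)"
        using N that by auto
      also have "\<dots> \<le> \<psi> j + ereal (2 ^ n * \<kappa>)"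
        using \<psi>_ge_intercept_line[OF True] by (rule add_right_mono)
      also have "\<dots> \<le> val (coeff (A_seq P d m - A_seq P d n) j)"
        using A_seq_diff_above_\<psi>[OF that(2)] True unfolding above_\<psi>_def by blast
      finally show ?thesis by simp
    qed
    have "ereal (of_int M) \<le> val (coeff (A_seq P d m) j - coeff (A_seq P d n) j)"
      if "N \<le> m" "N \<le> n" for m n
      using bound[of n m] bound[of m n] that val_minus[of "coeff (A_seq P d m) j - coeff (A_seq P d n) j"]
      by (cases "n \<le> m") auto
    then show ?thesis by blast
  qed
qed

definition "A_lim_coeff j =
  (SOME l. \<forall>M::int. \<exists>N. \<forall>n\<ge>N. ereal (of_int M) \<le> val (coeff (A_seq P d n) j - l))"

lemma A_lim_coeff:
  "\<forall>M::int. \<exists>N. \<forall>n\<ge>N. ereal (of_int M) \<le> val (coeff (A_seq P d n) j - A_lim_coeff j)"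
  unfolding A_lim_coeff_def using val_complete[OF A_seq_coeff_Cauchy[of j]] by (rule someI_ex)

definition "A_lim = (\<Sum>j<d. monom (A_lim_coeff j) j) + monom ad d"

lemma coeff_A_lim: "coeff A_lim j = (if j < d then A_lim_coeff j else if j = d then ad else 0)"
  by (auto simp: A_lim_def coeff_sum coeff_monom)

lemma A_seq_converges: "poly_val_converges val (A_seq P d) A_lim"
  unfolding poly_val_converges_def
proof (intro allI)
  fix j and M :: int
  show "\<exists>N. \<forall>i\<ge>N. ereal (of_int M) \<le> val (coeff (A_seq P d i) j - coeff A_lim j)"
    using A_lim_coeff[of j] coeff_A_seq_high[of j] by (cases "j < d") (simp_all add: coeff_A_lim)
qed

lemma A_lim_minus_A_seq: "above_\<psi> (2 ^ i * \<kappa>) (A_lim - A_seq P d i)"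
  unfolding above_\<psi>_def
proof (intro conjI allI impI)
  have "degree (A_lim - A_seq P d i) \<le> d - 1"
    using coeff_A_seq_high[of _ i] d_pos by (intro degree_le) (auto simp: coeff_A_lim)
  then show "degree (A_lim - A_seq P d i) < d" using d_pos by simp
  fix j assume j: "j < d"
  show "\<psi> j + ereal (2 ^ i * \<kappa>) \<le> val (coeff (A_lim - A_seq P d i) j)"
  proof (rule ereal_le_if_min_of_int_le)
    fix M :: int
    obtain N where N: "\<forall>n\<ge>N. ereal (of_int M) \<le> val (coeff (A_seq P d n) j - A_lim_coeff j)"
      using A_lim_coeff by blast
    define n where "n = max N i"
    have "\<psi> j + ereal (2 ^ i * \<kappa>) \<le> val (coeff (A_seq P d n - A_seq P d i) j)"
      using A_seq_diff_above_\<psi>[of i n] j n_def unfolding above_\<psi>_def by simp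
    then have "min (\<psi> j + ereal (2 ^ i * \<kappa>)) (ereal (of_int M))
        \<le> val (coeff (A_seq P d n - A_seq P d i) j - (coeff (A_seq P d n) j - A_lim_coeff j))"
      using N n_def by (intro val_diff_ge[OF min.coboundedI1 min.coboundedI2]) auto
    moreover have "coeff (A_seq P d n - A_seq P d i) j - (coeff (A_seq P d n) j - A_lim_coeff j)
        = coeff (A_lim - A_seq P d i) j"
      using j by (simp add: coeff_A_lim)
    ultimately show "min (\<psi> j + ereal (2 ^ i * \<kappa>)) (ereal (of_int M)) \<le> val (coeff (A_lim - A_seq P d i) j)"
      by simp
  qed
qed

lemma candidate_A_lim: "candidate A_lim"
proof -
  have "candidate (A_seq P d 0 + (A_lim - A_seq P d 0))"
    using candidate_add[OF candidate_A_seq[of 0] A_lim_minus_A_seq[of 0]] \<kappa>_pos by simp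
  then show ?thesis by simp
qed

lemma A_lim_dvd_P: "A_lim dvd P"
proof -
  have rem: "above_line \<sigma> (intercept + 2 ^ i * \<kappa>) (P mod A_lim)" for i
  proof -
    define A where "A = A_seq P d i"
    have A: "candidate A" and R: "above_\<psi> (2 ^ i * \<kappa>) (P mod A)"
      using newton_inv_A_seq[of i] unfolding newton_inv_def A_def by auto
    have "P = (P mod A - P div A * (A_lim - A)) + P div A * A_lim"
      by (simp add: algebra_simps)
    then have "P mod A_lim = (P mod A - P div A * (A_lim - A)) mod A_lim"
      by (metis mod_mult_self1)
    moreover have "above_line \<sigma> (0 + (intercept + 2 ^ i * \<kappa>)) (P div A * (A_lim - A))"
      using above_line_mult[OF above_line_div_P[OF A] above_\<psi>_imp_above_line[OF A_lim_minus_A_seq]]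
      unfolding A_def .
    ultimately show ?thesis
      using candidate_mod_div[OF candidate_A_lim] above_\<psi>_imp_above_line[OF R] above_line_diff
      by (metis add_0)
  qed
  have "coeff (P mod A_lim) k = 0" for k
  proof (rule val_unbounded_imp_zero)
    fix M :: int
    obtain N where "\<forall>n\<ge>N. of_int M - intercept - \<sigma> * real k \<le> 2 ^ n * \<kappa>"
      using eventually_le_two_power_mult[OF \<kappa>_pos] by blast
    then have "ereal (of_int M) \<le> ereal (intercept + 2 ^ N * \<kappa> + \<sigma> * real k)" by force
    also have "\<dots> \<le> val (coeff (P mod A_lim) k)"
      using rem[of N] unfolding above_line_def by blast
    finally show "ereal (of_int M) \<le> val (coeff (P mod A_lim) k)" .
  qed
  then have "P mod A_lim = 0" by (simp add: poly_eqI)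
  then show ?thesis by (simp add: mod_eq_0_iff_dvd)
qed

lemma coeff_A_lim_close:
  assumes j: "j < d"
  shows "coeff A_lim j = coeff P j \<or> \<psi> j < val (coeff A_lim j - coeff P j)"
proof -
  have close: "\<psi> j + ereal \<kappa> \<le> val (coeff A_lim j - coeff P j)"
    using A_lim_minus_A_seq[of 0] j unfolding above_\<psi>_def by (simp add: A_seq_0 coeff_truncation)
  show ?thesis
  proof (cases "\<psi> j")
    case (real r)
    then have "\<psi> j < \<psi> j + ereal \<kappa>" using \<kappa>_pos by simp
    also note close
    finally show ?thesis ..
  next
    case PInf
    then show ?thesis using close val_eq_infinity_iff by simp
  next
    case MInf
    then show ?thesis using \<psi>_ge_intercept_line[OF j] by simp
  qed
qed

end

section \<open>Extremal vertices\<close>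

locale extremal_vertex = valued_field val for val :: "'a::field \<Rightarrow> ereal" +
  fixes P :: "'a poly" and d :: nat and y :: real
  assumes P_nonzero: "P \<noteq> 0" and d_le_degree: "d \<le> degree P"
    and val_vertex: "val (coeff P d) = ereal y"
    and extreme: "(real d, y) extreme_point_of NP val P"
begin

definition "height j = real_of_ereal (val (coeff P j))"

lemma val_coeff_height: "coeff P j \<noteq> 0 \<Longrightarrow> val (coeff P j) = ereal (height j)"
  unfolding height_def by (rule val_eq_ereal_real)

lemma height_vertex: "height d = y"
  using val_vertex unfolding height_def by simp

lemma coeff_vertex_nonzero: "coeff P d \<noteq> 0"
  using val_vertex by auto

text \<open>Otherwise raising the two endpoints by the gap puts the vertex inside a segment of
  the Newton polygon.\<close>

lemma vertex_below_chord:
  assumes k: "k1 < d" "d < k2" "k2 \<le> degree P" and "coeff P k1 \<noteq> 0" "coeff P k2 \<noteq> 0"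
  shows "y < chord height k1 k2 (real d)"
proof (rule ccontr)
  assume "\<not> ?thesis"
  then have gap: "0 \<le> y - chord height k1 k2 (real d)" by simp
  define e where "e = y - chord height k1 k2 (real d)"
  define t where "t = (real d - real k1) / (real k2 - real k1)"
  define a where "a = (real k1, height k1 + e)"
  define b where "b = (real k2, height k2 + e)"
  have in_NP: "(real j, w) \<in> NP val P" if "j \<le> degree P" "val (coeff P j) \<le> ereal w" for j w
    unfolding NP_def by (rule hull_inc) (use that in auto)
  have "a \<in> NP val P" "b \<in> NP val P"
    unfolding a_def b_def e_def using k gap assms(4,5) val_coeff_height by (auto intro!: in_NP)
  moreover have "0 < t" "t < 1" using k unfolding t_def by (auto simp: divide_less_eq)
  moreover have "t * (real k2 - real k1) = real d - real k1" using k unfolding t_def by simp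
  then have "(1 - t) * real k1 + t * real k2 = real d" by (simp add: algebra_simps)
  moreover have "chord height k1 k2 (real d) = height k1 + (height k2 - height k1) * t"
    using k unfolding chord_def t_def by simp
  then have "(1 - t) * (height k1 + e) + t * (height k2 + e) = y"
    unfolding e_def by (simp add: algebra_simps)
  ultimately have "(real d, y) \<in> open_segment a b"
    unfolding a_def b_def using k by (auto simp: in_segment)
  then show False
    using extreme \<open>a \<in> NP val P\<close> \<open>b \<in> NP val P\<close> unfolding extreme_point_of_def by blast
qed

lemma slopes_at_vertex:
  assumes "j < d" "d < j'" "j' \<le> degree P" "coeff P j \<noteq> 0" "coeff P j' \<noteq> 0"
  shows "(height d - height j) / (real d - real j) < (height j' - height d) / (real j' - real d)"
  using vertex_below_chord[OF assms] chord_above_iff_slopes(2)[OF assms(1,2), of height]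
  by (simp add: height_vertex)

text \<open>Since the slopes to the left of the vertex are strictly smaller than those to its right,
  there are two distinct separating slopes, each giving a supporting line.\<close>

lemma two_supporting_lines:
  obtains s1 s2 where "s1 < s2"
    "\<forall>k\<le>degree P. ereal (y + s1 * (real k - real d)) \<le> val (coeff P k)"
    "\<forall>k\<le>degree P. ereal (y + s2 * (real k - real d)) \<le> val (coeff P k)"
proof -
  define C where "C = {k. k \<le> degree P \<and> coeff P k \<noteq> 0}"
  define L where "L = (\<lambda>j. (height d - height j) / (real d - real j)) ` {j \<in> C. j < d}"
  define R where "R = (\<lambda>j. (height j - height d) / (real j - real d)) ` {j \<in> C. d < j}"
  have "\<forall>l\<in>L. \<forall>r\<in>R. l < r"
    unfolding L_def R_def C_def using slopes_at_vertex by auto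
  moreover have "finite C" unfolding C_def by simp
  then have "finite L" "finite R" unfolding L_def R_def by simp_all
  ultimately obtain s1 s2 where s: "s1 < s2" "\<forall>l\<in>L. l \<le> s1" "\<forall>r\<in>R. s2 \<le> r"
    using finite_sets_strictly_separated[of L R] by blast
  have line: "\<forall>k\<le>degree P. ereal (y + s * (real k - real d)) \<le> val (coeff P k)"
    if sL: "\<forall>l\<in>L. l \<le> s" and sR: "\<forall>r\<in>R. s \<le> r" for s
  proof (intro allI impI)
    fix k assume k: "k \<le> degree P"
    have "\<forall>j\<in>C. j < d \<longrightarrow> (height d - height j) / (real d - real j) \<le> s"
      using sL unfolding L_def by blast
    moreover have "\<forall>j\<in>C. d < j \<longrightarrow> s \<le> (height j - height d) / (real j - real d)"
      using sR unfolding R_def by blast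
    ultimately have below: "\<forall>j\<in>C. height d + s * (real j - real d) \<le> height j"
      by (rule line_below_if_slopes_separated)
    show "ereal (y + s * (real k - real d)) \<le> val (coeff P k)"
    proof (cases "coeff P k = 0")
      case False
      then have "y + s * (real k - real d) \<le> height k"
        using below k height_vertex unfolding C_def by auto
      then show ?thesis unfolding val_coeff_height[OF False] by simp
    qed simp
  qed
  have "\<forall>r\<in>R. s1 \<le> r" "\<forall>l\<in>L. l \<le> s2" using s by force+
  then show ?thesis
    using that[OF s(1) line[OF s(2)] line[OF _ s(3)]] by blast
qed

lemma NF_ge_line_through_vertex:
  assumes "\<forall>k\<le>degree P. ereal (y + s * (real k - real d)) \<le> val (coeff P k)"
    and "0 \<le> x" "x \<le> real (degree P)"
  shows "ereal (y + s * (x - real d)) \<le> NF val P x"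
proof -
  have eq: "(y - s * real d) + s * z = y + s * (z - real d)" for z
    by (simp add: algebra_simps)
  have "\<forall>k\<le>degree P. ereal ((y - s * real d) + s * real k) \<le> val (coeff P k)"
    unfolding eq using assms(1) .
  from NF_ge_line[OF this assms(2,3)] show ?thesis unfolding eq .
qed

lemma NF_vertex: "NF val P (real d) = ereal y"
proof (rule antisym)
  show "NF val P (real d) \<le> ereal y"
    using NF_le_val_coeff[OF d_le_degree] unfolding val_vertex .
  obtain s1 s2 where "s1 < s2" and "\<forall>k\<le>degree P. ereal (y + s1 * (real k - real d)) \<le> val (coeff P k)"
    and "\<forall>k\<le>degree P. ereal (y + s2 * (real k - real d)) \<le> val (coeff P k)"
    by (rule two_supporting_lines)
  from NF_ge_line_through_vertex[OF this(2), of "real d"]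
  show "ereal y \<le> NF val P (real d)" using d_le_degree by simp
qed

lemma kink_pos: "NF val P (real d + 1) + NF val P (real d - 1) - 2 * NF val P (real d) > 0"
proof -
  obtain s1 s2 where s: "s1 < s2"
    and l1: "\<forall>k\<le>degree P. ereal (y + s1 * (real k - real d)) \<le> val (coeff P k)"
    and l2: "\<forall>k\<le>degree P. ereal (y + s2 * (real k - real d)) \<le> val (coeff P k)"
    by (rule two_supporting_lines)
  have right: "ereal (y + s2) \<le> NF val P (real d + 1)"
  proof (cases "d + 1 \<le> degree P")
    case True
    then show ?thesis using NF_ge_line_through_vertex[OF l2, of "real d + 1"] by simp
  qed (simp add: NF_outside)
  have left: "ereal (y - s1) \<le> NF val P (real d - 1)"
  proof (cases "1 \<le> d")
    case True
    then show ?thesis using NF_ge_line_through_vertex[OF l1, of "real d - 1"] d_le_degree by simp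
  qed (simp add: NF_outside)
  have "0 < ereal (y + s2 + (y - s1) - 2 * y)" using s by simp
  also have "\<dots> \<le> NF val P (real d + 1) + NF val P (real d - 1) - ereal (2 * y)"
    using add_mono[OF right left] by (cases "NF val P (real d + 1) + NF val P (real d - 1)") auto
  also have "ereal (2 * y) = 2 * NF val P (real d)" using NF_vertex by simp
  finally show ?thesis .
qed

text \<open>A touching pair straddling \<open>d\<close> would put the vertex on or above a chord.\<close>

lemma NF_supported_left:
  assumes "0 \<le> x" "x \<le> real d" "NF val P x \<noteq> \<infinity>"
  obtains i k t a s where "i \<le> k" "k \<le> d" "0 \<le> t" "t \<le> 1" "x = (1 - t) * real i + t * real k"
    "\<forall>j\<le>degree P. ereal (a + s * real j) \<le> val (coeff P j)"
    "val (coeff P i) = ereal (a + s * real i)" "val (coeff P k) = ereal (a + s * real k)"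
proof -
  have "x \<le> real (degree P)" using assms(2) d_le_degree by linarith
  with NF_supported[OF P_nonzero assms(1) _ assms(3)]
  obtain i k t a s where ik: "i \<le> k" "k \<le> degree P" "0 \<le> t" "t \<le> 1"
    and x: "x = (1 - t) * real i + t * real k"
    and below: "\<forall>j\<le>degree P. ereal (a + s * real j) \<le> val (coeff P j)"
    and vi: "val (coeff P i) = ereal (a + s * real i)" and vk: "val (coeff P k) = ereal (a + s * real k)"
    by blast
  have "t * real i \<le> t * real k" using ik by (intro mult_left_mono) auto
  then have ix: "real i \<le> x" unfolding x by (simp add: algebra_simps)
  consider "k \<le> d" | "i < d" "d < k" | "i = d" using ix assms(2) by linarith
  then show ?thesis
  proof cases
    case 1
    then show ?thesis using that ik x below vi vk by blast
  next
    case 2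
    have ci: "coeff P i \<noteq> 0" and ck: "coeff P k \<noteq> 0" using vi vk by auto
    have "a + s * real d \<le> y" using below d_le_degree val_vertex by (metis ereal_less_eq(3))
    moreover have "chord height i k (real d) = a + s * real d"
      using val_coeff_height[OF ci] val_coeff_height[OF ck] vi vk
      by (intro chord_of_line less_trans[OF 2]) simp_all
    ultimately show ?thesis
      using vertex_below_chord[OF 2 ik(2) ci ck] by simp
  next
    case 3
    then have "x = real d" using ix assms(2) by simp
    then show ?thesis using that[of d d 0 a s] 3 below vi by simp
  qed
qed

context
  fixes A :: "'a poly"
  assumes degree_A: "degree A = d" and lead_A: "coeff A d = coeff P d"
    and close: "\<forall>j<d. coeff A j = coeff P j \<or> NF val P (real j) < val (coeff A j - coeff P j)"
begin

lemma NF_le_val_coeff_close: "i < d \<Longrightarrow> NF val P (real i) \<le> val (coeff A i)"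
proof -
  assume i: "i < d"
  have NF_le: "NF val P (real i) \<le> val (coeff P i)"
    using NF_le_val_coeff i d_le_degree by simp
  consider "coeff A i = coeff P i" | "NF val P (real i) < val (coeff A i - coeff P i)"
    using close i by blast
  then show ?thesis
  proof cases
    case 2
    then have "NF val P (real i) \<le> val ((coeff A i - coeff P i) + coeff P i)"
      using NF_le by (intro val_add_ge) auto
    then show ?thesis by simp
  qed (use NF_le in simp)
qed

lemma val_coeff_close_eq:
  assumes "i \<le> d" "val (coeff P i) \<le> NF val P (real i)"
  shows "val (coeff A i) = val (coeff P i)"
proof (cases "i = d")
  case False
  then have "i < d" using assms(1) by simp
  then consider "coeff A i = coeff P i" | "NF val P (real i) < val (coeff A i - coeff P i)"
    using close by blast
  then show ?thesis
  proof cases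
    case 2
    then have "val (coeff P i) < val (coeff A i - coeff P i)" using assms(2) by simp
    then have "val (coeff P i + (coeff A i - coeff P i)) = val (coeff P i)" by (rule val_add_eq_left)
    then show ?thesis by simp
  qed simp
qed (simp add: lead_A)

lemma NF_close_le:
  assumes x: "0 \<le> x" "x \<le> real d"
  shows "NF val A x \<le> NF val P x"
proof (cases "NF val P x = \<infinity>")
  case False
  with NF_supported_left[OF x]
  obtain i k t a s where ik: "i \<le> k" "k \<le> d" and t: "0 \<le> t" "t \<le> 1"
    and x_eq: "x = (1 - t) * real i + t * real k"
    and below: "\<forall>j\<le>degree P. ereal (a + s * real j) \<le> val (coeff P j)"
    and vi: "val (coeff P i) = ereal (a + s * real i)" and vk: "val (coeff P k) = ereal (a + s * real k)"
    by blast
  have on_line: "val (coeff A j) = ereal (a + s * real j)"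
    if "j \<le> d" "val (coeff P j) = ereal (a + s * real j)" for j
    using val_coeff_close_eq[OF that(1)] NF_ge_line[OF below, of "real j"] that d_le_degree by simp
  show ?thesis
  proof (rule NF_least)
    show "0 \<le> x" "x \<le> real (degree A)" using x degree_A by auto
    fix g assume g: "NF_minorant A g"
    have "g x \<le> ereal (1 - t) * g (real i) + ereal t * g (real k)"
      using g t ik degree_A unfolding NF_minorant_def convex_on_ereal_def x_eq by auto
    also have "\<dots> \<le> ereal (1 - t) * val (coeff A i) + ereal t * val (coeff A k)"
      using g ik degree_A t unfolding NF_minorant_def by (intro add_mono ereal_mult_left_mono) auto
    also have "\<dots> = ereal (a + s * x)"
      using on_line[OF _ vi] on_line[OF _ vk] ik unfolding x_eq by (simp add: algebra_simps)
    also have "\<dots> \<le> NF val P x"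
      using NF_ge_line[OF below] x d_le_degree by simp
    finally show "g x \<le> NF val P x" .
  qed
qed simp

lemma NF_close_ge:
  assumes x: "0 \<le> x" "x \<le> real d"
  shows "NF val P x \<le> NF val A x"
proof (rule NF_least)
  show "0 \<le> x" "x \<le> real (degree P)" using x d_le_degree by auto
  fix g assume g: "NF_minorant P g"
  have "NF_minorant A g"
    unfolding NF_minorant_def
  proof (intro conjI ballI allI impI)
    show "convex_on_ereal {0..real (degree A)} g"
      using g degree_A d_le_degree unfolding NF_minorant_def convex_on_ereal_def by auto
    fix z assume "z \<in> {0..real (degree A)}"
    then show "g z \<noteq> -\<infinity>" using g degree_A d_le_degree unfolding NF_minorant_def by auto
  next
    fix i assume i: "i \<le> degree A"
    show "g (real i) \<le> val (coeff A i)"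
    proof (cases "i = d")
      case True
      then show ?thesis using g lead_A d_le_degree unfolding NF_minorant_def by auto
    next
      case False
      then have "i < d" using i degree_A by simp
      then show ?thesis
        using NF_upper[OF _ _ g, of "real i"] NF_le_val_coeff_close d_le_degree
        by (meson of_nat_0_le_iff of_nat_le_iff order_trans less_imp_le)
    qed
  qed
  then show "g x \<le> NF val A x" using NF_upper x degree_A by simp
qed

end

lemma NF_not_minf:
  assumes "0 \<le> x" "x \<le> real (degree P)"
  shows "NF val P x \<noteq> -\<infinity>"
proof -
  obtain s1 s2 where "s1 < s2" and "\<forall>k\<le>degree P. ereal (y + s1 * (real k - real d)) \<le> val (coeff P k)"
    and "\<forall>k\<le>degree P. ereal (y + s2 * (real k - real d)) \<le> val (coeff P k)"
    by (rule two_supporting_lines)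
  from NF_ge_line_through_vertex[OF this(2) assms] show ?thesis by auto
qed

lemma line_through_right_neighbour:
  assumes "NF val P (real d + 1) = ereal r" "d < k" "coeff P k \<noteq> 0"
  shows "ereal (y + (r - y) * (real k - real d)) \<le> val (coeff P k)"
proof -
  have "k \<le> degree P" using assms(3) le_degree by blast
  then have "NF val P (real d + 1) \<le> ereal (y + (height k - y) * (real d + 1 - real d) / (real k - real d))"
    using NF_le_chord[of d P k "real d + 1" y "height k"] assms(2) d_le_degree
      val_coeff_height[OF assms(3)] val_vertex by simp
  then have "(r - y) * (real k - real d) \<le> height k - y"
    using assms(1,2) by (simp add: field_simps)
  then show ?thesis using val_coeff_height[OF assms(3)] by simp
qed

lemma line_through_left_neighbour:
  assumes "NF val P (real d - 1) = ereal r" "k < d" "coeff P k \<noteq> 0"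
  shows "ereal (y + (y - r) * (real k - real d)) \<le> val (coeff P k)"
proof -
  have "NF val P (real d - 1) \<le> ereal (height k + (y - height k) * (real d - 1 - real k) / (real d - real k))"
    using NF_le_chord[of k P d "real d - 1" "height k" y] assms(2) d_le_degree
      val_coeff_height[OF assms(3)] val_vertex by simp
  then have "r * (real d - real k) \<le> height k * (real d - real k) + (y - height k) * (real d - 1 - real k)"
    using assms(1,2) by (simp add: field_simps)
  then have "y + (y - r) * (real k - real d) \<le> height k" by (simp add: algebra_simps)
  then show ?thesis using val_coeff_height[OF assms(3)] by simp
qed

end

text \<open>If the vertex is the first or last point of the polygon, or no coefficient lies to its
  left, then \<open>A\<^sub>0\<close> divides \<open>P\<close> and the sequence is constant; see \<open>interior_if_not_dvd\<close>.\<close>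

locale interior_vertex = extremal_vertex +
  assumes vertex_pos: "1 \<le> d" and vertex_less_degree: "d < degree P"
    and low_coeff: "\<exists>j<d. coeff P j \<noteq> 0"
begin

lemma NF_left_neighbour_finite: "\<exists>r. NF val P (real d - 1) = ereal r"
proof -
  obtain j where j: "j < d" "coeff P j \<noteq> 0" using low_coeff by blast
  have "NF val P (real d - 1) \<le> ereal (height j + (y - height j) * (real d - 1 - real j) / (real d - real j))"
    using NF_le_chord[of j P d "real d - 1" "height j" y] j d_le_degree
      val_coeff_height[OF j(2)] val_vertex by simp
  moreover have "NF val P (real d - 1) \<noteq> -\<infinity>" using NF_not_minf vertex_pos d_le_degree by simp
  ultimately show ?thesis by (cases "NF val P (real d - 1)") auto
qed

lemma NF_right_neighbour_finite: "\<exists>r. NF val P (real d + 1) = ereal r"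
proof -
  have "coeff P (degree P) \<noteq> 0" using P_nonzero by simp
  then have "NF val P (real d + 1) \<le> ereal (y + (height (degree P) - y) * (real d + 1 - real d) / (real (degree P) - real d))"
    using NF_le_chord[of d P "degree P" "real d + 1" y "height (degree P)"] vertex_less_degree d_le_degree
      val_coeff_height val_vertex by simp
  moreover have "NF val P (real d + 1) \<noteq> -\<infinity>" using NF_not_minf vertex_less_degree by simp
  ultimately show ?thesis by (cases "NF val P (real d + 1)") auto
qed

definition "left_slope = y - real_of_ereal (NF val P (real d - 1))"

definition "kink = real_of_ereal (NF val P (real d + 1)) + real_of_ereal (NF val P (real d - 1)) - 2 * y"

lemma NF_left_neighbour: "NF val P (real d - 1) = ereal (y - left_slope)"
  using NF_left_neighbour_finite unfolding left_slope_def by auto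

lemma NF_right_neighbour: "NF val P (real d + 1) = ereal (y + (left_slope + kink))"
  using NF_right_neighbour_finite NF_left_neighbour_finite unfolding left_slope_def kink_def by auto

lemma kink_eq: "NF val P (real d + 1) + NF val P (real d - 1) - 2 * NF val P (real d) = ereal kink"
  using NF_left_neighbour NF_right_neighbour NF_vertex by (simp add: algebra_simps)

lemma NF_step_le_left_slope:
  assumes "1 \<le> j" "j < d"
  shows "NF val P (real j) \<le> NF val P (real (j - 1)) + ereal left_slope"
proof (cases "NF val P (real (j - 1))")
  case (real a)
  have "NF val P (real j) + NF val P (real (j - 1) + real d - real j) \<le> ereal (a + y)"
    using NF_sum_le_sum_ends[of "real (j - 1)" "real j" "real d" P a y] real NF_vertex assms d_le_degree
    by simp
  moreover have "real (j - 1) + real d - real j = real d - 1" using assms by simp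
  ultimately have "NF val P (real j) + ereal (y - left_slope) \<le> ereal (a + y)"
    using NF_left_neighbour by simp
  then show ?thesis using real by (cases "NF val P (real j)") auto
next
  case MInf
  then show ?thesis using NF_not_minf[of "real (j - 1)"] assms d_le_degree by simp
qed simp

lemma val_coeff_above_right_line:
  "d < k \<Longrightarrow> ereal (y + (left_slope + kink) * (real k - real d)) \<le> val (coeff P k)"
  using line_through_right_neighbour[OF NF_right_neighbour] by (cases "coeff P k = 0") auto

lemma val_coeff_above_left_line:
  "k \<le> degree P \<Longrightarrow> ereal (y + left_slope * (real k - real d)) \<le> val (coeff P k)"
proof -
  assume "k \<le> degree P"
  consider "k < d" | "k = d" | "d < k" by linarith
  then show ?thesis
  proof cases
    case 1
    then show ?thesis
      using line_through_left_neighbour[OF NF_left_neighbour] by (cases "coeff P k = 0") auto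
  next
    case 2
    then show ?thesis using val_vertex by simp
  next
    case 3
    have "0 < kink" using kink_pos kink_eq by simp
    with 3 have "y + left_slope * (real k - real d) \<le> y + (left_slope + kink) * (real k - real d)"
      by (simp add: algebra_simps)
    then show ?thesis using val_coeff_above_right_line[OF 3] by (meson ereal_less_eq(3) order_trans)
  qed
qed

sublocale slope_factorization val P d "\<lambda>j. NF val P (real j)" left_slope y kink
proof unfold_locales
  show "1 \<le> d" "d < degree P" "val (coeff P d) = ereal y"
    using vertex_pos vertex_less_degree val_vertex by simp_all
  show "\<forall>j<d. NF val P (real j) \<le> val (coeff P j)"
    using NF_le_val_coeff d_le_degree by simp
  show "NF val P (real (d - 1)) = ereal (y - left_slope)"
    using NF_left_neighbour vertex_pos by (simp add: of_nat_diff)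
  show "\<forall>j. 1 \<le> j \<longrightarrow> j < d \<longrightarrow> NF val P (real j) \<le> NF val P (real (j - 1)) + ereal left_slope"
    using NF_step_le_left_slope by blast
  show "\<forall>j<d. ereal (y - left_slope * real d + left_slope * real j) \<le> NF val P (real j)"
    using NF_ge_line_through_vertex[of left_slope] val_coeff_above_left_line d_le_degree
    by (simp add: algebra_simps)
  show "\<forall>k>d. ereal (y + (left_slope + kink) * (real k - real d)) \<le> val (coeff P k)"
    using val_coeff_above_right_line by blast
  show "0 < kink" using kink_pos kink_eq by simp
qed

lemma NF_A_lim: "\<forall>x\<in>{0..real d}. NF val A_lim x = NF val P x"
  using NF_close_le NF_close_ge candidate_A_lim coeff_A_lim_close
  unfolding candidate_def by (metis antisym atLeastAtMost_iff)

lemma A_lim_rate: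
  "j < d \<Longrightarrow> NF val P (real j) + ereal (2 ^ i) * ereal kink \<le> val (coeff (A_lim - A_seq P d i) j)"
  using A_lim_minus_A_seq[of i] unfolding above_\<psi>_def by simp

end

context extremal_vertex
begin

lemma coeff_A_seq_0: "coeff (A_seq P d 0) j = (if j \<le> d then coeff P j else 0)"
  unfolding A_seq_0 by (rule coeff_truncation)

lemma degree_A_seq_0: "degree (A_seq P d 0) = d"
  by (intro antisym degree_le le_degree) (auto simp: coeff_A_seq_0 coeff_vertex_nonzero)

lemma lead_coeff_A_seq_0: "lead_coeff (A_seq P d 0) = coeff P d"
  by (simp add: degree_A_seq_0 coeff_A_seq_0)

lemma NF_A_seq_0: "\<forall>x\<in>{0..real d}. NF val (A_seq P d 0) x = NF val P x"
  using NF_close_le NF_close_ge degree_A_seq_0 coeff_A_seq_0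
  by (metis (no_types, lifting) antisym atLeastAtMost_iff less_imp_le order_refl)

lemma interior_if_not_dvd:
  assumes "\<not> A_seq P d 0 dvd P"
  shows "interior_vertex val P d y"
proof
  have A0: "A_seq P d 0 = (\<Sum>i\<le>d. monom (coeff P i) i)" by (rule A_seq_0)
  show "d < degree P"
  proof (rule ccontr)
    assume "\<not> d < degree P"
    then have "A_seq P d 0 = P"
      using d_le_degree poly_as_sum_of_monoms[of P] A0 by simp
    then show False using assms by simp
  qed
  show low: "\<exists>j<d. coeff P j \<noteq> 0"
  proof (rule ccontr)
    assume "\<not> (\<exists>j<d. coeff P j \<noteq> 0)"
    then have "\<forall>j<d. coeff P j = 0" by simp
    then have "A_seq P d 0 = monom (coeff P d) d"
      by (intro poly_eqI) (auto simp: coeff_A_seq_0 coeff_monom)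
    moreover have "P = monom (coeff P d) d * smult (inverse (coeff P d)) (poly_shift d P)"
      using \<open>\<forall>j<d. coeff P j = 0\<close> coeff_vertex_nonzero
      by (intro poly_eqI) (auto simp: coeff_monom_mult coeff_poly_shift)
    ultimately show False using assms by (metis dvd_triv_left)
  qed
  show "1 \<le> d" using low by auto
qed

end

theorem theorem4p1:
  fixes val :: "'a::field \<Rightarrow> ereal" and P :: "'a poly" and n d :: nat
  assumes "complete_dvf val"
    and "degree P = n" and "P \<noteq> 0"
    and "d \<le> n"
    and "\<exists>y. val (coeff P d) = ereal y \<and> (real d, y) extreme_point_of NP val P"
  defines "\<kappa> \<equiv> NF val P (real d + 1) + NF val P (real d - 1) - 2 * NF val P (real d)"
  shows "(\<forall>i. degree (A_seq P d i) = d \<and> lead_coeff (A_seq P d i) = coeff P d)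
       \<and> (\<exists>Ainf. poly_val_converges val (A_seq P d) Ainf
                \<and> Ainf dvd P \<and> degree Ainf = d \<and> lead_coeff Ainf = coeff P d
                \<and> (\<forall>x\<in>{0..real d}. NF val Ainf x = NF val P x)
                \<and> (\<forall>i. \<forall>j<d. NF val P (real j) + ereal (2 ^ i) * \<kappa>
                                \<le> val (coeff (Ainf - A_seq P d i) j)))
       \<and> \<kappa> > 0"
proof -
  obtain y where "val (coeff P d) = ereal y" "(real d, y) extreme_point_of NP val P"
    using assms(5) by blast
  then interpret extremal_vertex val P d y
    using assms(1-4) by unfold_locales auto
  have "\<kappa> > 0" unfolding \<kappa>_def by (rule kink_pos)
  show ?thesis
  proof (cases "A_seq P d 0 dvd P")
    case True
    define A0 where "A0 = A_seq P d 0"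
    have "A_seq P d i = A0" for i unfolding A0_def using A_seq_const[OF True] .
    then show ?thesis
      using True \<open>\<kappa> > 0\<close> degree_A_seq_0 lead_coeff_A_seq_0 NF_A_seq_0
      unfolding poly_val_converges_def A0_def[symmetric] by (intro conjI exI[of _ A0]) simp_all
  next
    case False
    then interpret interior_vertex val P d y by (rule interior_if_not_dvd)
    show ?thesis
      using \<open>\<kappa> > 0\<close> candidate_A_seq A_seq_converges A_lim_dvd_P candidate_A_lim NF_A_lim A_lim_rate
      unfolding \<kappa>_def kink_eq candidate_def by (intro conjI exI[of _ A_lim]) auto
  qed
qed

end
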